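(* Let $\ell\ge1$ be an integer and let $S_\ell$ be the restriction of $S^\ell$ to $(P_\ell)^{2\ell+1}$. Then the spectral radius satisfies $\rho(S_\ell)<1$. Equivalently, for every $c\in\mathbb{C}$ with $|c|=1$, the only $A\in(P_\ell)^{2\ell+1}$ satisfying $T^\ell(\omega)A(\omega)=c\,A(\omega^2)$ is $A=0$. Consequently $\mathbb{E}\,T^\ell(\omega^{2^k})T^\ell(\omega^{2^{k-1}})\cdots T^\ell(\omega)\to0$ as $k\to\infty$, where $\omega$ is uniform on the unit circle.
   Context: For $\ell\in\{\tfrac12,1,\tfrac32,\dots\}$ and $m,n\in\{-\ell,\dots,\ell\}$ let $\tau^\ell_{m,n}=\sqrt{\frac{(\ell-m)!(\ell+m)!}{(\ell-n)!(\ell+n)!}}\,\frac{i^{2\ell}}{2^\ell}\cdot[\text{coefficient of }z^{\ell-m}\text{ in }(z+1)^{\ell-n}(z-1)^{\ell+n}]$, and $\tau^\ell=(\tau^\ell_{m,n})$ (a unitary $(2\ell+1)\times(2\ell+1)$ matrix, indices $-\ell,\dots,\ell$). For integer $\ell\ge1$ let $T^\ell(\omega)=\tau^\ell\,\mathrm{diag}(\omega^{-\ell},\omega^{-\ell+1},\dots,\omega^{\ell})$. Let $P$ be the space of complex Laurent polynomials in $\omega$, and $P_\ell=\mathrm{span}_{\mathbb{C}}\{\omega^{-(\ell-1)},\dots,\omega^{\ell-1}\}$. Define $S^\ell:P^{2\ell+1}\to P^{2\ell+1}$ by: if $T^\ell(\omega)A=\big[\sum_j\beta_{h}(j)\omega^j\big]_{h=-\ell}^{\ell}$,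 then $S^\ell A=\big[\sum_j\beta_h(2j)\omega^j\big]_{h=-\ell}^{\ell}$. $S^\ell$ maps $(P_\ell)^{2\ell+1}$ into itself. *)

theory Defs
  imports "HOL-Analysis.Analysis" "HOL-Computational_Algebra.Polynomial"
    "Jordan_Normal_Form.Spectral_Radius"
begin

definition tau :: "nat \<Rightarrow> int \<Rightarrow> int \<Rightarrow> complex" where
  "tau l m n =
     complex_of_real (sqrt (fact (nat (int l - m)) * fact (nat (int l + m))
                          / (fact (nat (int l - n)) * fact (nat (int l + n)))))
     * (\<i> ^ (2 * l) / 2 ^ l)
     * of_int (coeff ([:1, 1:] ^ nat (int l - n) * [:-1, 1:] ^ nat (int l + n)) (nat (int l - m)))"

(* A vector of Laurent polynomials A \<in> P^(2l+1) is encoded by its coefficient array: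
   A h j = coefficient of \<omega>^j in the h-th component (h \<in> {-l..l}), finitely supported. *)

definition in_Pl :: "nat \<Rightarrow> (int \<Rightarrow> int \<Rightarrow> complex) \<Rightarrow> bool" where
  "in_Pl l A \<longleftrightarrow> (\<forall>h j. (h \<notin> {-int l..int l} \<or> j \<notin> {-(int l - 1)..int l - 1}) \<longrightarrow> A h j = 0)"

definition evalA :: "nat \<Rightarrow> (int \<Rightarrow> int \<Rightarrow> complex) \<Rightarrow> complex \<Rightarrow> int \<Rightarrow> complex" where
  "evalA l A \<omega> h = (\<Sum>j\<in>{-(int l - 1)..int l - 1}. A h j * \<omega> powi j)"

(* beta_h(j): coefficient of \<omega>^j in the h-th component of T^l(\<omega>) A,
   where T^l(\<omega>) = tau^l diag(\<omega>^-l, ..., \<omega>^l) *)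
definition beta :: "nat \<Rightarrow> (int \<Rightarrow> int \<Rightarrow> complex) \<Rightarrow> int \<Rightarrow> int \<Rightarrow> complex" where
  "beta l A h j = (if h \<in> {-int l..int l}
                    then (\<Sum>n\<in>{-int l..int l}. tau l h n * A n (j - n)) else 0)"

definition Sop :: "nat \<Rightarrow> (int \<Rightarrow> int \<Rightarrow> complex) \<Rightarrow> (int \<Rightarrow> int \<Rightarrow> complex)" where
  "Sop l A h j = beta l A h (2 * j)"

definition dimPl :: "nat \<Rightarrow> nat" where
  "dimPl l = (2 * l + 1) * (2 * l - 1)"

definition idx_h :: "nat \<Rightarrow> nat \<Rightarrow> int" where
  "idx_h l k = int (k div (2 * l - 1)) - int l"

definition idx_j :: "nat \<Rightarrow> nat \<Rightarrow> int" where
  "idx_j l k = int (k mod (2 * l - 1)) - (int l - 1)"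

definition basisPl :: "nat \<Rightarrow> nat \<Rightarrow> (int \<Rightarrow> int \<Rightarrow> complex)" where
  "basisPl l k = (\<lambda>h j. if h = idx_h l k \<and> j = idx_j l k then 1 else 0)"

definition S_mat :: "nat \<Rightarrow> complex Matrix.mat" where
  "S_mat l = Matrix.mat (dimPl l) (dimPl l)
     (\<lambda>(r, c). Sop l (basisPl l c) (idx_h l r) (idx_j l r))"

definition T_mat :: "nat \<Rightarrow> complex \<Rightarrow> complex Matrix.mat" where
  "T_mat l \<omega> = Matrix.mat (2 * l + 1) (2 * l + 1)
     (\<lambda>(r, c). tau l (int r - int l) (int c - int l) * \<omega> powi (int c - int l))"

primrec T_prod :: "nat \<Rightarrow> nat \<Rightarrow> complex \<Rightarrow> complex Matrix.mat" where
  "T_prod l 0 \<omega> = T_mat l \<omega>"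
| "T_prod l (Suc k) \<omega> = T_mat l (\<omega> ^ (2 ^ Suc k)) * T_prod l k \<omega>"

definition E_T_prod :: "nat \<Rightarrow> nat \<Rightarrow> nat \<Rightarrow> nat \<Rightarrow> complex" where
  "E_T_prod l k r c =
     integral {0..2 * pi} (\<lambda>t. T_prod l k (cis t) $$ (r, c)) / complex_of_real (2 * pi)"

end

theory Submission
  imports Defs
begin

text \<open>
  The matrix \<open>\<tau>\<^sup>\<ell>\<close> is unitary: up to the weights \<open>(\<ell>-n)!(\<ell>+n)!\<close> its columns are the
  coefficient vectors of \<open>(1+z)\<^sup>\<ell>\<^sup>-\<^sup>n(z-1)\<^sup>\<ell>\<^sup>+\<^sup>n\<close>, and the generating function
  \<open>\<Sum>\<^sub>n P\<^sub>n(z)P\<^sub>n(w)/((\<ell>-n)!(\<ell>+n)!) = 4\<^sup>\<ell>(1+zw)\<^sup>2\<^sup>\<ell>/(2\<ell>)!\<close> shows that these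
  vectors are orthogonal. Hence \<open>A \<mapsto> T\<^sup>\<ell> A\<close> preserves the \<open>\<ell>\<^sup>2\<close>-norm of coefficient
  arrays, and since \<open>S\<^sup>\<ell>\<close> keeps only the even coefficients of \<open>T\<^sup>\<ell> A\<close>, an eigenvector of
  \<open>S\<^sub>\<ell>\<close> with eigenvalue \<open>|\<lambda>| \<ge> 1\<close> must have \<open>T\<^sup>\<ell>A\<close> without odd coefficients, i.e. it
  solves \<open>T\<^sup>\<ell>(\<omega>)A(\<omega>) = \<lambda>A(\<omega>\<^sup>2)\<close>, the same equation as in the second claim.
  Such a solution vanishes: injectivity of \<open>\<tau>\<^sup>\<ell>\<close> and the symmetry
  \<open>\<tau>\<^sub>m\<^sub>,\<^sub>-\<^sub>n = (-1)\<^sup>\<ell>\<^sup>-\<^sup>m \<tau>\<^sub>m\<^sub>,\<^sub>n\<close> show that every nonzero coefficient \<open>A\<^sub>h(j)\<close> produces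
  nonzero coefficients \<open>A\<^sub>n(2j-n)\<close> and \<open>A\<^sub>-\<^sub>n(2j+n)\<close>, so the extreme exponents of \<open>A\<close>
  are both \<open>0\<close>; the support then shrinks to the single entry \<open>A\<^sub>0(0)\<close>, which is killed by
  \<open>\<tau>\<^sub>\<ell>\<^sub>,\<^sub>0 \<noteq> 0\<close>. Finally, averaging over the circle kills every term carrying an odd
  power of \<open>\<omega>\<close>, so the expectation of the product \<open>T\<^sup>\<ell>(\<omega>^2^k) \<cdots> T\<^sup>\<ell>(\<omega>)\<close> is
  an entry of \<open>(S\<^sub>\<ell>)\<^sup>k\<^sup>+\<^sup>1\<close> applied to a constant vector, which tends to \<open>0\<close>.
\<close>

section \<open>The matrix \<open>\<tau>\<close> is unitary\<close>

lemma bivariate_polyfun_eq_0: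
  fixes M :: "nat \<Rightarrow> nat \<Rightarrow> 'a::{idom,real_normed_div_algebra}"
  assumes zero: "\<And>z w. (\<Sum>k\<le>N. \<Sum>k'\<le>N. M k k' * z^k * w^k') = 0"
    and k: "k \<le> N" and k': "k' \<le> N"
  shows "M k k' = 0"
proof -
  have "(\<Sum>k'\<le>N. M k k' * w^k') = 0" for w
  proof -
    have "\<forall>z. (\<Sum>k\<le>N. (\<Sum>k'\<le>N. M k k' * w^k') * z^k) = 0"
      using zero[of _ w] by (simp add: sum_distrib_right sum_distrib_left mult_ac)
    from polyfun_eq_0[THEN iffD1, OF this] k show ?thesis by simp
  qed
  then have "\<forall>w. (\<Sum>k'\<le>N. M k k' * w^k') = 0" ..
  from polyfun_eq_0[THEN iffD1, OF this] k' show ?thesis by simp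
qed

lemma poly_eq_sum_coeffs_le:
  fixes p :: "'a::comm_semiring_1 poly"
  assumes "degree p \<le> N"
  shows "poly p x = (\<Sum>i\<le>N. coeff p i * x ^ i)"
proof -
  have "poly p x = poly (\<Sum>i\<le>N. monom (coeff p i) i) x"
    using poly_as_sum_of_monoms'[OF assms] by simp
  also have "\<dots> = (\<Sum>i\<le>N. coeff p i * x ^ i)" by (simp add: poly_sum poly_monom)
  finally show ?thesis .
qed

definition tau_poly :: "nat \<Rightarrow> int \<Rightarrow> int poly" where
  "tau_poly l n = [:1, 1:] ^ nat (int l - n) * [:-1, 1:] ^ nat (int l + n)"

definition tau_coeff :: "nat \<Rightarrow> int \<Rightarrow> nat \<Rightarrow> real" where
  "tau_coeff l n k = real_of_int (coeff (tau_poly l n) k)"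

definition fact_weight :: "nat \<Rightarrow> int \<Rightarrow> real" where
  "fact_weight l n = fact (nat (int l - n)) * fact (nat (int l + n))"

lemma fact_weight_pos: "fact_weight l n > 0"
  unfolding fact_weight_def by simp

lemma fact_weight_uminus: "fact_weight l (-n) = fact_weight l n"
  unfolding fact_weight_def by (simp add: mult_ac)

lemma tau_eq:
  "tau l m n = complex_of_real (sqrt (fact_weight l m / fact_weight l n) * tau_coeff l n (nat (int l - m)))
     * (\<i>^(2*l) / 2^l)"
  unfolding tau_def fact_weight_def tau_coeff_def tau_poly_def by simp

lemma sum_tau_coeff_power:
  assumes "n \<in> {-int l..int l}"
  shows "(\<Sum>k\<le>2*l. tau_coeff l n k * z ^ k) = (1 + z) ^ nat (int l - n) * (z - 1) ^ nat (int l + n)"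
proof -
  let ?a = "nat (int l - n)" and ?b = "nat (int l + n)"
  let ?p = "([:1, 1:] :: real poly) ^ ?a * [:-1, 1:] ^ ?b"
  have p: "map_poly of_int (tau_poly l n) = ?p"
    unfolding tau_poly_def by (simp add: of_int_poly_hom.hom_mult of_int_poly_hom.hom_power)
  have "degree ?p \<le> degree (([:1, 1:] :: real poly) ^ ?a) + degree (([:-1, 1:] :: real poly) ^ ?b)"
    by (rule degree_mult_le)
  also have "\<dots> \<le> ?a * 1 + ?b * 1"
    by (intro add_mono order.trans[OF degree_power_le]) auto
  also have "\<dots> = 2 * l" using assms by auto
  finally have "degree (map_poly (of_int :: int \<Rightarrow> real) (tau_poly l n)) \<le> 2 * l"
    unfolding p .
  then have "(\<Sum>k\<le>2*l. tau_coeff l n k * z ^ k) = poly (map_poly of_int (tau_poly l n)) z"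
    by (subst poly_eq_sum_coeffs_le) (simp_all add: tau_coeff_def)
  then show ?thesis by (simp add: p poly_power algebra_simps)
qed

lemma tau_poly_generating_function:
  fixes z w :: real
  shows "(\<Sum>n\<in>{-int l..int l}. ((1+z)^nat(int l - n) * (z-1)^nat(int l + n))
            * ((1+w)^nat(int l - n) * (w-1)^nat(int l + n)) / fact_weight l n)
       = (\<Sum>k\<le>2*l. 4^l / (fact k * fact (2*l-k)) * (z*w)^k)"
proof -
  let ?X = "(1+z)*(1+w)" and ?Y = "(z-1)*(w-1)"
  have "(\<Sum>n\<in>{-int l..int l}. ((1+z)^nat(int l - n) * (z-1)^nat(int l + n))
            * ((1+w)^nat(int l - n) * (w-1)^nat(int l + n)) / fact_weight l n)
      = (\<Sum>k\<le>2*l. ?X ^ k * ?Y ^ (2*l-k) / (fact k * fact (2*l-k)))"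
  proof (rule sum.reindex_bij_witness[where j="\<lambda>n. nat (int l - n)" and i="\<lambda>k. int l - int k"])
    fix n assume n: "n \<in> {-int l..int l}"
    have b: "2*l - nat (int l - n) = nat (int l + n)" using n by auto
    show "?X ^ nat (int l - n) * ?Y ^ (2*l - nat (int l - n)) / (fact (nat (int l - n)) * fact (2*l - nat (int l - n)))
       = ((1+z)^nat(int l - n) * (z-1)^nat(int l + n)) * ((1+w)^nat(int l - n) * (w-1)^nat(int l + n)) / fact_weight l n"
      unfolding b fact_weight_def by (simp add: power_mult_distrib mult_ac)
  qed auto
  also have "\<dots> = (\<Sum>k\<le>2*l. of_nat (2*l choose k) * ?X ^ k * ?Y ^ (2*l-k)) / fact (2*l)"
    by (simp add: sum_divide_distrib binomial_fact)
  also have "\<dots> = (?X + ?Y) ^ (2*l) / fact (2*l)" by (simp add: binomial_ring)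
  also have "?X + ?Y = 2 * (1 + z*w)" by (simp add: algebra_simps)
  also have "(2 * (1 + z*w)) ^ (2*l) = 4^l * (1 + z*w)^(2*l)"
    by (simp only: power_mult_distrib power_mult) simp
  also have "(1 + z*w)^(2*l) = (\<Sum>k\<le>2*l. of_nat (2*l choose k) * (z*w)^k)"
    using binomial_ring[of "z*w" 1 "2*l"] by (simp add: add.commute)
  also have "4^l * (\<Sum>k\<le>2*l. of_nat (2*l choose k) * (z*w)^k) / fact (2*l)
      = (\<Sum>k\<le>2*l. 4^l / (fact k * fact (2*l-k)) * (z*w)^k)"
    by (simp add: sum_distrib_left sum_divide_distrib binomial_fact)
  finally show ?thesis .
qed

lemma tau_coeff_orthogonal:
  assumes k: "k \<le> 2*l" and k': "k' \<le> 2*l"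
  shows "(\<Sum>n\<in>{-int l..int l}. tau_coeff l n k * tau_coeff l n k' / fact_weight l n)
       = (if k = k' then 4^l / (fact k * fact (2*l-k)) else 0)"
proof -
  let ?I = "{-int l..int l}"
  let ?G = "\<lambda>k k'. \<Sum>n\<in>?I. tau_coeff l n k * tau_coeff l n k' / fact_weight l n"
  let ?D = "\<lambda>k k'. if k = k' then 4^l / (fact k * fact (2*l-k)) else (0::real)"
  have "?G k k' - ?D k k' = 0"
  proof (rule bivariate_polyfun_eq_0[OF _ k k'])
    fix z w :: real
    have "(\<Sum>k\<le>2*l. \<Sum>k'\<le>2*l. ?G k k' * z^k * w^k')
        = (\<Sum>n\<in>?I. (\<Sum>k\<le>2*l. tau_coeff l n k * z^k) * (\<Sum>k'\<le>2*l. tau_coeff l n k' * w^k') / fact_weight l n)"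
    proof -
      have "(\<Sum>n\<in>?I. (\<Sum>k\<le>2*l. tau_coeff l n k * z^k) * (\<Sum>k'\<le>2*l. tau_coeff l n k' * w^k') / fact_weight l n)
          = (\<Sum>n\<in>?I. \<Sum>k\<le>2*l. \<Sum>k'\<le>2*l. tau_coeff l n k * tau_coeff l n k' / fact_weight l n * z^k * w^k')"
        by (unfold sum_product, simp add: sum_divide_distrib mult_ac)
      also have "\<dots> = (\<Sum>k\<le>2*l. \<Sum>k'\<le>2*l. \<Sum>n\<in>?I. tau_coeff l n k * tau_coeff l n k' / fact_weight l n * z^k * w^k')"
        by (subst sum.swap) (rule sum.cong[OF refl], rule sum.swap)
      finally show ?thesis by (simp add: sum_distrib_right)
    qed
    also have "\<dots> = (\<Sum>k\<le>2*l. 4^l / (fact k * fact (2*l-k)) * (z*w)^k)"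
      using tau_poly_generating_function[where z=z and w=w and l=l] by (simp add: sum_tau_coeff_power)
    also have "\<dots> = (\<Sum>k\<le>2*l. \<Sum>k'\<le>2*l. ?D k k' * z^k * w^k')"
      by (rule sum.cong[OF refl])
        (simp add: if_distrib[where f="\<lambda>x. x * _"] sum.delta power_mult_distrib cong: if_cong)
    finally show "(\<Sum>k\<le>2*l. \<Sum>k'\<le>2*l. (?G k k' - ?D k k') * z^k * w^k') = 0"
      by (simp add: left_diff_distrib sum_subtractf)
  qed
  then show ?thesis by simp
qed

lemma tau_phase_times_cnj: "(\<i>^(2*l) / 2^l) * cnj (\<i>^(2*l) / 2^l) = (1 / 4^l :: complex)"
proof -
  have "\<i>^(2*l) / 2^l = ((-1::complex)^l / 2^l)" and "cnj (\<i>^(2*l) / 2^l) = ((-1::complex)^l / 2^l)"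
    by (simp_all add: power_mult)
  then have "(\<i>^(2*l) / 2^l) * cnj (\<i>^(2*l) / 2^l) = ((-1)*(-1::complex))^l / (2*2)^l"
    by (simp only: power_mult_distrib times_divide_times_eq)
  then show ?thesis by simp
qed

lemma sqrt_div_mult_sqrt_div:
  assumes "a \<ge> 0" "b \<ge> 0" "c > 0"
  shows "sqrt (a / c) * sqrt (b / c) = sqrt (a * b) / c"
proof -
  have "sqrt (a / c) * sqrt (b / c) = sqrt a * sqrt b / (sqrt c * sqrt c)"
    by (simp add: real_sqrt_divide)
  also have "sqrt c * sqrt c = c" using assms by simp
  finally show ?thesis by (simp add: real_sqrt_mult)
qed

lemma tau_rows_orthonormal:
  assumes m: "m \<in> {-int l..int l}" and m': "m' \<in> {-int l..int l}"
  shows "(\<Sum>n\<in>{-int l..int l}. tau l m n * cnj (tau l m' n)) = (if m = m' then 1 else 0)"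
proof -
  define k where "k = nat (int l - m)"
  define k' where "k' = nat (int l - m')"
  define X where "X = sqrt (fact_weight l m * fact_weight l m') / 4^l"
  have k: "k \<le> 2*l" and k': "k' \<le> 2*l" using m m' unfolding k_def k'_def by auto
  have entry: "tau l m n * cnj (tau l m' n)
      = complex_of_real (X * (tau_coeff l n k * tau_coeff l n k' / fact_weight l n))" for n
  proof -
    have "tau l m n * cnj (tau l m' n)
        = complex_of_real (sqrt (fact_weight l m / fact_weight l n) * sqrt (fact_weight l m' / fact_weight l n)
            * tau_coeff l n k * tau_coeff l n k') * ((\<i>^(2*l) / 2^l) * cnj (\<i>^(2*l) / 2^l))"
      unfolding tau_eq k_def k'_def by (simp add: mult_ac)
    also have "\<dots> = complex_of_real (sqrt (fact_weight l m * fact_weight l m') / fact_weight l n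
        * tau_coeff l n k * tau_coeff l n k') / 4^l"
      unfolding tau_phase_times_cnj
      by (simp add: sqrt_div_mult_sqrt_div fact_weight_pos less_imp_le)
    also have "\<dots> = complex_of_real (X * (tau_coeff l n k * tau_coeff l n k' / fact_weight l n))"
      unfolding X_def by (simp add: field_simps)
    finally show ?thesis .
  qed
  have "(\<Sum>n\<in>{-int l..int l}. tau l m n * cnj (tau l m' n))
      = complex_of_real (X * (\<Sum>n\<in>{-int l..int l}. tau_coeff l n k * tau_coeff l n k' / fact_weight l n))"
    by (simp add: entry sum_distrib_left)
  also have "\<dots> = complex_of_real (X * (if k = k' then 4^l / (fact k * fact (2*l-k)) else 0))"
    by (simp add: tau_coeff_orthogonal[OF k k'])
  also have "\<dots> = (if m = m' then 1 else 0)"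
  proof (cases "m = m'")
    case True
    have "2*l - nat (int l - m) = nat (int l + m)" using m by auto
    then have "fact k * fact (2*l-k) = fact_weight l m"
      unfolding fact_weight_def k_def by simp
    then show ?thesis
      using True fact_weight_pos[of l m] unfolding X_def k_def k'_def by simp
  next
    case False
    then have "k \<noteq> k'" unfolding k_def k'_def using m m' by auto
    then show ?thesis using False by simp
  qed
  finally show ?thesis .
qed

lemma sum_centered_eq_sum_lessThan:
  "(\<Sum>n\<in>{-int l..int l}. g n) = (\<Sum>r\<in>{0..<2*l+1}. g (int r - int l))"
  by (rule sum.reindex_bij_witness[where j="\<lambda>n. nat (n + int l)" and i="\<lambda>r. int r - int l"]) auto

lemma tau_columns_orthonormal:
  assumes n: "n \<in> {-int l..int l}" and n': "n' \<in> {-int l..int l}"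
  shows "(\<Sum>m\<in>{-int l..int l}. cnj (tau l m n) * tau l m n') = (if n = n' then 1 else 0)"
proof -
  define U :: "complex mat" where "U = mat (2*l+1) (2*l+1) (\<lambda>(r,c). tau l (int r - int l) (int c - int l))"
  define V :: "complex mat" where "V = mat (2*l+1) (2*l+1) (\<lambda>(r,c). cnj (tau l (int c - int l) (int r - int l)))"
  have "U * V = 1\<^sub>m (2*l+1)"
  proof (rule eq_matI)
    fix r c assume r: "r < dim_row (1\<^sub>m (2*l+1))" and c: "c < dim_col (1\<^sub>m (2*l+1))"
    have "(U * V) $$ (r, c) = (\<Sum>n\<in>{-int l..int l}. tau l (int r - int l) n * cnj (tau l (int c - int l) n))"
      using r c by (simp add: U_def V_def scalar_prod_def sum_centered_eq_sum_lessThan)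
    then show "(U * V) $$ (r, c) = 1\<^sub>m (2*l+1) $$ (r, c)"
      using r c by (subst (asm) tau_rows_orthonormal) auto
  qed (auto simp: U_def V_def)
  then have VU: "V * U = 1\<^sub>m (2*l+1)"
    by (rule mat_mult_left_right_inverse[rotated 2]) (auto simp: U_def V_def)
  define r where "r = nat (n + int l)"
  define c where "c = nat (n' + int l)"
  have r: "r < 2*l+1" and c: "c < 2*l+1" and rn: "int r - int l = n" and cn: "int c - int l = n'"
    using n n' unfolding r_def c_def by auto
  have "(V * U) $$ (r, c)
      = (\<Sum>m\<in>{-int l..int l}. cnj (tau l m (int r - int l)) * tau l m (int c - int l))"
    using r c by (simp add: U_def V_def scalar_prod_def sum_centered_eq_sum_lessThan)
  moreover have "r = c \<longleftrightarrow> n = n'" using rn cn by auto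
  ultimately show ?thesis using r c by (simp add: VU rn cn)
qed

lemma tau_isometry:
  "(\<Sum>m\<in>{-int l..int l}. (cmod (\<Sum>n\<in>{-int l..int l}. tau l m n * v n))^2)
     = (\<Sum>n\<in>{-int l..int l}. (cmod (v n))^2)"
proof -
  let ?I = "{-int l..int l}"
  have "complex_of_real (\<Sum>m\<in>?I. (cmod (\<Sum>n\<in>?I. tau l m n * v n))^2)
      = (\<Sum>m\<in>?I. (\<Sum>n\<in>?I. tau l m n * v n) * cnj (\<Sum>n\<in>?I. tau l m n * v n))"
    by (simp only: of_real_sum complex_norm_square)
  also have "\<dots> = (\<Sum>m\<in>?I. \<Sum>n\<in>?I. \<Sum>n'\<in>?I. (v n * cnj (v n')) * (cnj (tau l m n') * tau l m n))"
    by (simp add: sum_product mult_ac)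
  also have "\<dots> = (\<Sum>n\<in>?I. \<Sum>n'\<in>?I. \<Sum>m\<in>?I. (v n * cnj (v n')) * (cnj (tau l m n') * tau l m n))"
    by (subst sum.swap) (rule sum.cong[OF refl], rule sum.swap)
  also have "\<dots> = (\<Sum>n\<in>?I. \<Sum>n'\<in>?I. (v n * cnj (v n')) * (\<Sum>m\<in>?I. cnj (tau l m n') * tau l m n))"
    by (simp add: sum_distrib_left)
  also have "\<dots> = (\<Sum>n\<in>?I. v n * cnj (v n))"
    by (simp add: tau_columns_orthonormal if_distrib[where f="\<lambda>x. _ * x"] cong: if_cong)
  also have "\<dots> = complex_of_real (\<Sum>n\<in>?I. (cmod (v n))^2)"
    by (simp only: of_real_sum complex_norm_square)
  finally show ?thesis using of_real_eq_iff by blast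
qed

lemma tau_injective:
  assumes "\<And>h. h \<in> {-int l..int l} \<Longrightarrow> (\<Sum>n\<in>{-int l..int l}. tau l h n * v n) = 0"
    and "n \<in> {-int l..int l}"
  shows "v n = 0"
proof -
  have "(\<Sum>n\<in>{-int l..int l}. (cmod (v n))^2) = 0"
    using tau_isometry[of l v] assms(1) by simp
  with assms(2) show ?thesis
    by (subst (asm) sum_nonneg_eq_0_iff) auto
qed

lemma tau_coeff_uminus:
  assumes n: "n \<in> {-int l..int l}" and k: "k \<le> 2*l"
  shows "tau_coeff l (-n) k = (-1)^k * tau_coeff l n k"
proof -
  have "\<forall>x::real. (\<Sum>k\<le>2*l. tau_coeff l (-n) k * x^k) = (\<Sum>k\<le>2*l. ((-1)^k * tau_coeff l n k) * x^k)"
  proof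
    fix x :: real
    have flip: "1 + - x = (-1) * (x - 1)" "- x - 1 = (-1) * (1 + x)" by simp_all
    have "(\<Sum>k\<le>2*l. ((-1)^k * tau_coeff l n k) * x^k) = (\<Sum>k\<le>2*l. tau_coeff l n k * (-x)^k)"
      by (intro sum.cong refl) (simp only: power_minus[of x] mult_ac)
    also have "\<dots> = (1 + - x) ^ nat (int l - n) * (- x - 1) ^ nat (int l + n)"
      by (rule sum_tau_coeff_power[OF n])
    also have "\<dots> = ((-1) * (x - 1)) ^ nat (int l - n) * ((-1) * (1 + x)) ^ nat (int l + n)"
      by (simp only: flip)
    also have "\<dots> = (-1) ^ (nat (int l - n) + nat (int l + n)) * ((1 + x) ^ nat (int l + n) * (x - 1) ^ nat (int l - n))"
      by (simp only: power_mult_distrib power_add mult_ac)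
    also have "nat (int l - n) + nat (int l + n) = 2 * l" using n by auto
    also have "(-1::real) ^ (2*l) = 1" by (simp only: power_mult) simp
    also have "(1 + x) ^ nat (int l + n) * (x - 1) ^ nat (int l - n) = (\<Sum>k\<le>2*l. tau_coeff l (-n) k * x^k)"
      using sum_tau_coeff_power[of "-n" l x] n by simp
    finally show "(\<Sum>k\<le>2*l. tau_coeff l (-n) k * x^k) = (\<Sum>k\<le>2*l. ((-1)^k * tau_coeff l n k) * x^k)"
      by simp
  qed
  from polyfun_eq_coeffs[THEN iffD1, OF this] k show ?thesis by simp
qed

lemma tau_uminus:
  assumes "m \<in> {-int l..int l}" and "n \<in> {-int l..int l}"
  shows "tau l m (-n) = (-1) ^ nat (int l - m) * tau l m n"
proof -
  have k: "nat (int l - m) \<le> 2*l" using assms(1) by auto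
  show ?thesis unfolding tau_eq fact_weight_uminus tau_coeff_uminus[OF assms(2) k] by simp
qed

lemma tau_top_0_neq_0: "tau l (int l) 0 \<noteq> 0"
proof -
  have "(\<Sum>k\<le>2*l. tau_coeff l 0 k * 0^k) = (1 + 0) ^ nat (int l - 0) * (0 - 1 :: real) ^ nat (int l + 0)"
    by (rule sum_tau_coeff_power) auto
  then have "tau_coeff l 0 0 = (-1)^l"
    by (simp add: power_0_left if_distrib[where f="\<lambda>x. _ * x"] cong: if_cong)
  then show ?thesis unfolding tau_eq using fact_weight_pos[of l "int l"] fact_weight_pos[of l 0] by simp
qed


lemma beta_eq_sum:
  "h \<in> {-int l..int l} \<Longrightarrow> beta l A h k = (\<Sum>n\<in>{-int l..int l}. tau l h n * A n (k - n))"
  unfolding beta_def by simp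

lemma in_Pl_nonzero_range:
  "in_Pl l A \<Longrightarrow> A n j \<noteq> 0 \<Longrightarrow> n \<in> {-int l..int l} \<and> j \<in> {-(int l - 1)..int l - 1}"
  unfolding in_Pl_def by blast

lemma beta_eq_0_outside:
  assumes P: "in_Pl l A" and k: "\<bar>k\<bar> \<ge> 2 * int l"
  shows "beta l A h k = 0"
proof -
  have "A n (k - n) = 0" if "n \<in> {-int l..int l}" for n
    using in_Pl_nonzero_range[OF P, of n "k - n"] that k by (auto simp: abs_if split: if_splits)
  then show ?thesis unfolding beta_def by simp
qed

lemma laurent_poly_eq_0:
  fixes a :: "int \<Rightarrow> complex"
  assumes zero: "\<And>\<omega>. \<omega> \<noteq> 0 \<Longrightarrow> (\<Sum>k\<in>{-int M..int M}. a k * \<omega> powi k) = 0"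
    and k: "k \<in> {-int M..int M}"
  shows "a k = 0"
proof -
  define p where "p = (\<Sum>i\<le>2*M. monom (a (int i - int M)) i)"
  have "poly p \<omega> = 0" if w: "\<omega> \<noteq> 0" for \<omega>
  proof -
    have "poly p \<omega> = (\<Sum>i\<le>2*M. a (int i - int M) * \<omega> ^ i)"
      unfolding p_def by (simp add: poly_sum poly_monom)
    also have "\<dots> = (\<Sum>k\<in>{-int M..int M}. a k * \<omega> powi k * \<omega> ^ M)"
    proof (rule sum.reindex_bij_witness[where j="\<lambda>i. int i - int M" and i="\<lambda>k. nat (k + int M)"])
      fix i assume "i \<in> {..2*M}"
      have "\<omega> powi (int i - int M) * \<omega> ^ M = \<omega> ^ i"
        using w by (simp add: power_int_diff)
      then show "a (int i - int M) * \<omega> powi (int i - int M) * \<omega> ^ M = a (int i - int M) * \<omega> ^ i"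
        by (simp add: mult.assoc)
    qed auto
    also have "\<dots> = 0" using zero[OF w] by (simp flip: sum_distrib_right)
    finally show ?thesis .
  qed
  then have "p = 0"
    using poly_roots_finite[of p] finite_subset[of "UNIV - {0}" "{x. poly p x = 0}"]
    by (auto simp: infinite_UNIV_char_0)
  then have "coeff p (nat (k + int M)) = 0" by simp
  moreover have "nat (k + int M) \<le> 2*M" and "int (nat (k + int M)) - int M = k" using k by auto
  ultimately show ?thesis unfolding p_def by (simp add: coeff_sum coeff_monom)
qed

lemma sum_shift_to_support:
  assumes n: "n \<in> {-int l..int l}"
    and zero: "\<And>k. k \<in> {-(2*int l)..2*int l} \<Longrightarrow> k - n \<notin> {-(int l - 1)..int l - 1} \<Longrightarrow> F k = 0"
  shows "(\<Sum>k\<in>{-(2*int l)..2*int l}. F k) = (\<Sum>j\<in>{-(int l - 1)..int l - 1}. F (j + n))"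
proof -
  let ?J = "{-(int l - 1)..int l - 1}" and ?K = "{-(2*int l)..2*int l}"
  have "(\<Sum>j\<in>?J. F (j + n)) = (\<Sum>k\<in>(\<lambda>j. j + n) ` ?J. F k)"
    by (subst sum.reindex) (auto simp: inj_on_def)
  also have "\<dots> = (\<Sum>k\<in>?K. F k)"
  proof (rule sum.mono_neutral_left)
    show "(\<lambda>j. j + n) ` ?J \<subseteq> ?K" using n by auto
    show "\<forall>i\<in>?K - (\<lambda>j. j + n) ` ?J. F i = 0"
      using zero by (force simp: image_iff)
  qed auto
  finally show ?thesis by simp
qed

lemma sum_tau_powi_evalA_eq_beta:
  assumes P: "in_Pl l A" and h: "h \<in> {-int l..int l}" and w: "\<omega> \<noteq> 0"
  shows "(\<Sum>n\<in>{-int l..int l}. tau l h n * \<omega> powi n * evalA l A \<omega> n)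
       = (\<Sum>k\<in>{-(2*int l)..2*int l}. beta l A h k * \<omega> powi k)"
proof -
  let ?I = "{-int l..int l}" and ?J = "{-(int l - 1)..int l - 1}" and ?K = "{-(2*int l)..2*int l}"
  have "(\<Sum>k\<in>?K. beta l A h k * \<omega> powi k) = (\<Sum>k\<in>?K. \<Sum>n\<in>?I. tau l h n * (A n (k - n) * \<omega> powi k))"
    by (simp add: beta_eq_sum[OF h] sum_distrib_right sum_distrib_left mult_ac)
  also have "\<dots> = (\<Sum>n\<in>?I. tau l h n * (\<Sum>k\<in>?K. A n (k - n) * \<omega> powi k))"
    by (subst sum.swap) (simp add: sum_distrib_left)
  also have "\<dots> = (\<Sum>n\<in>?I. tau l h n * (\<Sum>j\<in>?J. A n j * \<omega> powi (j + n)))"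
  proof (rule sum.cong[OF refl])
    fix n assume n: "n \<in> ?I"
    have "(\<Sum>k\<in>?K. A n (k - n) * \<omega> powi k) = (\<Sum>j\<in>?J. A n (j + n - n) * \<omega> powi (j + n))"
      by (rule sum_shift_to_support[OF n]) (use P in \<open>auto simp: in_Pl_def\<close>)
    then show "tau l h n * (\<Sum>k\<in>?K. A n (k - n) * \<omega> powi k) = tau l h n * (\<Sum>j\<in>?J. A n j * \<omega> powi (j + n))"
      by simp
  qed
  also have "\<dots> = (\<Sum>n\<in>?I. tau l h n * \<omega> powi n * evalA l A \<omega> n)"
    unfolding evalA_def using w by (simp add: power_int_add sum_distrib_left mult_ac)
  finally show ?thesis by simp
qed

lemma sum_split_even_odd:
  "(\<Sum>k\<in>{-(2*int l)..2*int l}. f k) = (\<Sum>j\<in>{-int l..int l}. f (2*j)) + (\<Sum>j\<in>{-int l..int l - 1}. f (2*j+1))"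
proof -
  let ?E = "(\<lambda>j. 2*j) ` {-int l..int l}" and ?O = "(\<lambda>j. 2*j+1) ` {-int l..int l - 1}"
  have "{-(2*int l)..2*int l} = ?E \<union> ?O"
  proof (intro subset_antisym subsetI)
    fix k assume k: "k \<in> {-(2*int l)..2*int l}"
    show "k \<in> ?E \<union> ?O"
    proof (cases "even k")
      case True
      then have "k = 2 * (k div 2)" and "k div 2 \<in> {-int l..int l}" using k by auto
      then show ?thesis by blast
    next
      case False
      then have "k = 2 * (k div 2) + 1" and "k div 2 \<in> {-int l..int l - 1}"
        using k by (auto, presburger+)
      then show ?thesis by blast
    qed
  qed auto
  moreover have "?E \<inter> ?O = {}" by auto presburger
  ultimately have "(\<Sum>k\<in>{-(2*int l)..2*int l}. f k) = (\<Sum>k\<in>?E. f k) + (\<Sum>k\<in>?O. f k)"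
    by (simp add: sum.union_disjoint)
  also have "\<dots> = (\<Sum>j\<in>{-int l..int l}. f (2*j)) + (\<Sum>j\<in>{-int l..int l - 1}. f (2*j+1))"
    by (simp add: sum.reindex inj_on_def)
  finally show ?thesis .
qed

lemma evalA_eq_sum_wide:
  assumes "in_Pl l A"
  shows "evalA l A \<omega> h = (\<Sum>j\<in>{-int l..int l}. A h j * \<omega> powi j)"
  unfolding evalA_def
  by (rule sum.mono_neutral_left) (use assms in \<open>auto simp: in_Pl_def\<close>)

lemma beta_norm2_eq:
  assumes P: "in_Pl l A"
  shows "(\<Sum>h\<in>{-int l..int l}. \<Sum>k\<in>{-(2*int l)..2*int l}. (cmod (beta l A h k))^2)
       = (\<Sum>n\<in>{-int l..int l}. \<Sum>j\<in>{-(int l - 1)..int l - 1}. (cmod (A n j))^2)"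
proof -
  let ?I = "{-int l..int l}" and ?J = "{-(int l - 1)..int l - 1}" and ?K = "{-(2*int l)..2*int l}"
  have "(\<Sum>h\<in>?I. \<Sum>k\<in>?K. (cmod (beta l A h k))^2)
      = (\<Sum>k\<in>?K. \<Sum>h\<in>?I. (cmod (\<Sum>n\<in>?I. tau l h n * A n (k - n)))^2)"
    by (subst sum.swap) (simp add: beta_eq_sum)
  also have "\<dots> = (\<Sum>n\<in>?I. \<Sum>k\<in>?K. (cmod (A n (k - n)))^2)"
    by (subst sum.swap) (simp add: tau_isometry)
  also have "\<dots> = (\<Sum>n\<in>?I. \<Sum>j\<in>?J. (cmod (A n j))^2)"
  proof (rule sum.cong[OF refl])
    fix n assume n: "n \<in> ?I"
    have "(\<Sum>k\<in>?K. (cmod (A n (k - n)))^2) = (\<Sum>j\<in>?J. (cmod (A n (j + n - n)))^2)"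
      by (rule sum_shift_to_support[OF n]) (use P in \<open>auto simp: in_Pl_def\<close>)
    then show "(\<Sum>k\<in>?K. (cmod (A n (k - n)))^2) = (\<Sum>j\<in>?J. (cmod (A n j))^2)" by simp
  qed
  finally show ?thesis .
qed

section \<open>Solutions of the refinement equation vanish\<close>

text \<open>The coefficientwise form of \<open>T\<^sup>\<ell>(\<omega>)A(\<omega>) = c A(\<omega>\<^sup>2)\<close>.\<close>

definition solves_refinement :: "nat \<Rightarrow> complex \<Rightarrow> (int \<Rightarrow> int \<Rightarrow> complex) \<Rightarrow> bool" where
  "solves_refinement l c A \<longleftrightarrow> in_Pl l A
     \<and> (\<forall>h\<in>{-int l..int l}. \<forall>k. odd k \<longrightarrow> beta l A h k = 0)
     \<and> (\<forall>h\<in>{-int l..int l}. \<forall>j. beta l A h (2*j) = c * A h j)"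

context
  fixes l :: nat and c :: complex and A :: "int \<Rightarrow> int \<Rightarrow> complex"
  assumes sol: "solves_refinement l c A"
begin

private lemma solution_in_Pl: "in_Pl l A"
  and solution_beta_odd: "h \<in> {-int l..int l} \<Longrightarrow> odd k \<Longrightarrow> beta l A h k = 0"
  and solution_beta_even: "h \<in> {-int l..int l} \<Longrightarrow> beta l A h (2*j) = c * A h j"
  using sol unfolding solves_refinement_def by auto

lemma solution_parity:
  assumes nz: "A n j \<noteq> 0"
  shows "even (n + j)"
proof (rule ccontr)
  assume odd: "odd (n + j)"
  have "A n ((n + j) - n) = 0"
  proof (rule tau_injective[where v="\<lambda>n'. A n' ((n + j) - n')"])
    fix h assume "h \<in> {-int l..int l}"
    then show "(\<Sum>n'\<in>{-int l..int l}. tau l h n' * A n' ((n + j) - n')) = 0"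
      using solution_beta_odd[OF _ odd] by (simp add: beta_eq_sum)
  qed (use in_Pl_nonzero_range[OF solution_in_Pl nz] in simp)
  with nz show False by simp
qed

lemma solution_halve:
  assumes nz: "A n j \<noteq> 0"
  shows "\<exists>h\<in>{-int l..int l}. A h ((n + j) div 2) \<noteq> 0"
proof (rule ccontr)
  let ?m = "(n + j) div 2"
  assume "\<not> ?thesis"
  then have zero: "A h ?m = 0" if "h \<in> {-int l..int l}" for h
    using that by blast
  have "A n (2 * ?m - n) = 0"
  proof (rule tau_injective[where v="\<lambda>n'. A n' (2 * ?m - n')"])
    fix h assume h: "h \<in> {-int l..int l}"
    show "(\<Sum>n'\<in>{-int l..int l}. tau l h n' * A n' (2 * ?m - n')) = 0"
      using solution_beta_even[OF h, of ?m] zero[OF h] by (simp add: beta_eq_sum[OF h])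
  qed (use in_Pl_nonzero_range[OF solution_in_Pl nz] in simp)
  moreover have "2 * ?m = n + j" using solution_parity[OF nz] by simp
  ultimately show False using nz by simp
qed

text \<open>The reflection \<open>n \<mapsto> -n\<close> multiplies \<open>\<tau>\<^sub>h\<^sub>,\<^sub>n\<close> by \<open>(-1)\<^sup>\<ell>\<^sup>-\<^sup>h\<close>; since
  only rows \<open>h \<equiv> j (mod 2)\<close> carry nonzero coefficients \<open>A\<^sub>h(j)\<close>, the sign depends on \<open>j\<close> alone.\<close>

lemma solution_reflect:
  assumes n: "n \<in> {-int l..int l}"
  shows "A (-n) (2*j + n) = (if even (int l + j) then 1 else -1) * A n (2*j - n)"
proof -
  let ?I = "{-int l..int l}" and ?s = "if even (int l + j) then 1 else -1 :: complex"
  have sign: "(-1) ^ nat (int l - h) * (c * A h j) = ?s * (c * A h j)" if h: "h \<in> ?I" for h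
  proof (cases "A h j = 0")
    case False
    have "even (nat (int l - h)) \<longleftrightarrow> even (int l - h)" using h by (simp add: even_nat_iff)
    also have "\<dots> \<longleftrightarrow> even (int l + j)" using solution_parity[OF False] by presburger
    finally show ?thesis by (auto simp: neg_one_even_power neg_one_odd_power)
  qed simp
  have "A (-n) (2*j - (-n)) - ?s * A n (2*j - n) = 0"
  proof (rule tau_injective[where v="\<lambda>n. A (-n) (2*j - (-n)) - ?s * A n (2*j - n)", OF _ n])
    fix h assume h: "h \<in> ?I"
    have "(\<Sum>n\<in>?I. tau l h n * A (-n) (2*j - (-n))) = (\<Sum>n\<in>?I. tau l h (-n) * A n (2*j - n))"
      by (rule sum.reindex_bij_witness[where i=uminus and j=uminus]) auto
    also have "\<dots> = (-1) ^ nat (int l - h) * beta l A h (2*j)"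
      by (simp add: beta_eq_sum[OF h] tau_uminus[OF h] sum_distrib_left mult_ac)
    also have "\<dots> = ?s * beta l A h (2*j)"
      using sign[OF h] by (simp add: solution_beta_even[OF h])
    finally show "(\<Sum>n\<in>?I. tau l h n * (A (-n) (2*j - (-n)) - ?s * A n (2*j - n))) = 0"
      by (simp add: beta_eq_sum[OF h] right_diff_distrib sum_subtractf sum_distrib_left mult_ac)
  qed
  then show ?thesis by simp
qed

lemma solution_pair:
  assumes c: "c \<noteq> 0" and nz: "A h j \<noteq> 0"
  shows "\<exists>n. A n (2*j - n) \<noteq> 0 \<and> A (-n) (2*j + n) \<noteq> 0"
proof -
  have h: "h \<in> {-int l..int l}" using in_Pl_nonzero_range[OF solution_in_Pl nz] by simp
  then have "(\<Sum>n\<in>{-int l..int l}. tau l h n * A n (2*j - n)) \<noteq> 0"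
    using solution_beta_even[OF h, of j] nz c by (simp add: beta_eq_sum)
  then obtain n where n: "n \<in> {-int l..int l}" and "tau l h n * A n (2*j - n) \<noteq> 0"
    by (meson sum.neutral)
  then have "A n (2*j - n) \<noteq> 0" by simp
  moreover have "A (-n) (2*j + n) \<noteq> 0"
    using solution_reflect[OF n, of j] calculation by (cases "even (int l + j)") simp_all
  ultimately show ?thesis by blast
qed

lemma solution_exponent_eq_0:
  assumes c: "c \<noteq> 0" and nz: "A n j \<noteq> 0"
  shows "j = 0"
proof -
  define D where "D = {j. \<exists>n. A n j \<noteq> 0}"
  have "D \<subseteq> {-(int l - 1)..int l - 1}" unfolding D_def using in_Pl_nonzero_range[OF solution_in_Pl] by auto
  then have fin: "finite D" by (rule finite_subset) simp
  have jD: "j \<in> D" unfolding D_def using nz by auto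
  have "Max D \<le> 0"
  proof -
    obtain h where "A h (Max D) \<noteq> 0" using Max_in[OF fin] jD unfolding D_def by blast
    then obtain n' where "A n' (2 * Max D - n') \<noteq> 0" "A (-n') (2 * Max D + n') \<noteq> 0"
      using solution_pair[OF c] by blast
    then have "2 * Max D - n' \<le> Max D" "2 * Max D + n' \<le> Max D"
      using Max_ge[OF fin] unfolding D_def by blast+
    then show ?thesis by simp
  qed
  moreover have "Min D \<ge> 0"
  proof -
    obtain h where "A h (Min D) \<noteq> 0" using Min_in[OF fin] jD unfolding D_def by blast
    then obtain n' where "A n' (2 * Min D - n') \<noteq> 0" "A (-n') (2 * Min D + n') \<noteq> 0"
      using solution_pair[OF c] by blast
    then have "Min D \<le> 2 * Min D - n'" "Min D \<le> 2 * Min D + n'"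
      using Min_le[OF fin] unfolding D_def by blast+
    then show ?thesis by simp
  qed
  ultimately show ?thesis using Max_ge[OF fin jD] Min_le[OF fin jD] by simp
qed

lemma solution_eq_0:
  assumes l: "l \<ge> 1" and c: "c \<noteq> 0"
  shows "A = (\<lambda>h j. 0)"
proof -
  have supp: "n = 0 \<and> j = 0" if nz: "A n j \<noteq> 0" for n j
  proof -
    have j: "j = 0" using solution_exponent_eq_0[OF c nz] .
    obtain h where "A h ((n + j) div 2) \<noteq> 0" using solution_halve[OF nz] by blast
    then have "(n + j) div 2 = 0" using solution_exponent_eq_0[OF c] by blast
    with solution_parity[OF nz] j show ?thesis by auto
  qed
  have top: "int l \<in> {-int l..int l}" by simp
  have "A (int l) 0 = 0" using supp[of "int l" 0] l by auto
  then have "(\<Sum>n\<in>{-int l..int l}. tau l (int l) n * A n (0 - n)) = 0"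
    using solution_beta_even[OF top, of 0] by (simp add: beta_eq_sum[OF top])
  moreover have "(\<Sum>n\<in>{-int l..int l}. tau l (int l) n * A n (0 - n))
      = (\<Sum>n\<in>{-int l..int l}. if n = 0 then tau l (int l) 0 * A 0 0 else 0)"
    by (intro sum.cong refl) (use supp in force)
  ultimately have "A 0 0 = 0" using tau_top_0_neq_0[of l] by simp
  with supp show ?thesis by fastforce
qed

end

lemma power_int_double: "(\<omega>::complex) powi (2*j) = (\<omega>\<^sup>2) powi j"
  by (simp add: power_int_mult)

lemma refinement_equation_imp_solves_refinement:
  assumes P: "in_Pl l A"
    and eq: "\<And>\<omega> h. \<omega> \<noteq> 0 \<Longrightarrow> h \<in> {-int l..int l} \<Longrightarrow>
       (\<Sum>n\<in>{-int l..int l}. tau l h n * \<omega> powi n * evalA l A \<omega> n) = c * evalA l A (\<omega>\<^sup>2) h"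
  shows "solves_refinement l c A"
proof -
  let ?I = "{-int l..int l}" and ?K = "{-(2*int l)..2*int l}"
  let ?rhs = "\<lambda>h k. if even k then c * A h (k div 2) else 0"
  have coeff: "beta l A h k = ?rhs h k" if h: "h \<in> ?I" and k: "k \<in> ?K" for h k
  proof -
    have "(\<Sum>k\<in>{-int (2*l)..int (2*l)}. (beta l A h k - ?rhs h k) * \<omega> powi k) = 0"
      if w: "\<omega> \<noteq> 0" for \<omega>
    proof -
      have "(\<Sum>k\<in>?K. ?rhs h k * \<omega> powi k)
          = (\<Sum>j\<in>?I. ?rhs h (2*j) * \<omega> powi (2*j)) + (\<Sum>j\<in>{-int l..int l - 1}. ?rhs h (2*j+1) * \<omega> powi (2*j+1))"
        by (rule sum_split_even_odd)
      also have "\<dots> = c * evalA l A (\<omega>\<^sup>2) h"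
        by (simp add: evalA_eq_sum_wide[OF P] sum_distrib_left power_int_double mult.assoc)
      finally have "(\<Sum>k\<in>?K. ?rhs h k * \<omega> powi k) = c * evalA l A (\<omega>\<^sup>2) h" .
      with eq[OF w h] sum_tau_powi_evalA_eq_beta[OF P h w]
      show ?thesis by (simp add: left_diff_distrib sum_subtractf)
    qed
    moreover have "k \<in> {-int (2*l)..int (2*l)}" using k by auto
    ultimately have "beta l A h k - ?rhs h k = 0"
      by (rule laurent_poly_eq_0)
    then show ?thesis by simp
  qed
  have "beta l A h k = 0" if "h \<in> ?I" "odd k" for h k
  proof (cases "k \<in> ?K")
    case True with coeff[OF that(1) True] that(2) show ?thesis by simp
  qed (intro beta_eq_0_outside[OF P], auto)
  moreover have "beta l A h (2*j) = c * A h j" if h: "h \<in> ?I" for h j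
  proof (cases "2*j \<in> ?K")
    case True with coeff[OF h True] show ?thesis by simp
  next
    case False
    then have "beta l A h (2*j) = 0" by (intro beta_eq_0_outside[OF P]) auto
    moreover have "A h j = 0" using False P unfolding in_Pl_def by auto
    ultimately show ?thesis by simp
  qed
  ultimately show ?thesis unfolding solves_refinement_def using P by blast
qed

section \<open>The matrix of \<open>S\<^sub>\<ell>\<close>\<close>

definition Pl_pos :: "nat \<Rightarrow> int \<Rightarrow> int \<Rightarrow> nat" where
  "Pl_pos l h j = nat ((h + int l) * (2*int l - 1) + (j + int l - 1))"

definition array_of_vec :: "nat \<Rightarrow> complex vec \<Rightarrow> (int \<Rightarrow> int \<Rightarrow> complex)" where
  "array_of_vec l v = (\<lambda>h j. if h \<in> {-int l..int l} \<and> j \<in> {-(int l - 1)..int l - 1} then v $ Pl_pos l h j else 0)"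

definition vec_of_array :: "nat \<Rightarrow> (int \<Rightarrow> int \<Rightarrow> complex) \<Rightarrow> complex vec" where
  "vec_of_array l A = vec (dimPl l) (\<lambda>r. A (idx_h l r) (idx_j l r))"

lemma of_nat_double_minus_1: "l \<ge> 1 \<Longrightarrow> int (2*l - 1) = 2*int l - 1"
  by simp

lemma idx_in_range:
  assumes l: "l \<ge> 1" and r: "r < dimPl l"
  shows "idx_h l r \<in> {-int l..int l}" "idx_j l r \<in> {-(int l - 1)..int l - 1}"
proof -
  have d: "2*l - 1 > 0" using l by simp
  have "r div (2*l - 1) < 2*l + 1" using r d unfolding dimPl_def by (simp add: div_less_iff_less_mult)
  then show "idx_h l r \<in> {-int l..int l}" unfolding idx_h_def by simp
  have "r mod (2*l - 1) < 2*l - 1" using d by simp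
  then have "int (r mod (2*l - 1)) < int (2*l - 1)" by linarith
  then show "idx_j l r \<in> {-(int l - 1)..int l - 1}"
    unfolding idx_j_def using of_nat_double_minus_1[OF l] by simp
qed

lemma Pl_pos_idx:
  assumes l: "l \<ge> 1" and r: "r < dimPl l"
  shows "Pl_pos l (idx_h l r) (idx_j l r) = r"
proof -
  have "(idx_h l r + int l) * (2*int l - 1) + (idx_j l r + int l - 1)
      = int (r div (2*l - 1)) * int (2*l - 1) + int (r mod (2*l - 1))"
    unfolding idx_h_def idx_j_def of_nat_double_minus_1[OF l] by simp
  also have "\<dots> = int (r div (2*l - 1) * (2*l - 1) + r mod (2*l - 1))" by simp
  also have "r div (2*l - 1) * (2*l - 1) + r mod (2*l - 1) = r" by (rule div_mult_mod_eq)
  finally show ?thesis unfolding Pl_pos_def by simp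
qed

lemma idx_Pl_pos:
  assumes l: "l \<ge> 1" and h: "h \<in> {-int l..int l}" and j: "j \<in> {-(int l - 1)..int l - 1}"
  shows "Pl_pos l h j < dimPl l" "idx_h l (Pl_pos l h j) = h" "idx_j l (Pl_pos l h j) = j"
proof -
  define q where "q = nat (h + int l)"
  define m where "m = nat (j + int l - 1)"
  define d where "d = 2*l - 1"
  have qi: "int q = h + int l" and mi: "int m = j + int l - 1" using h j unfolding q_def m_def by auto
  have md: "m < d" using j l unfolding m_def d_def by auto
  have q2: "q \<le> 2*l" using h unfolding q_def by auto
  have p: "Pl_pos l h j = q * d + m"
  proof -
    have "(h + int l) * (2*int l - 1) + (j + int l - 1) = int q * int d + int m"
      using qi mi of_nat_double_minus_1[OF l] unfolding d_def by simp
    also have "\<dots> = int (q * d + m)" by simp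
    finally show ?thesis unfolding Pl_pos_def by (simp only: nat_int)
  qed
  have "q * d + m < (q + 1) * d" using md by simp
  also have "\<dots> \<le> (2*l + 1) * d" using q2 by (intro mult_right_mono) auto
  finally show "Pl_pos l h j < dimPl l" unfolding p dimPl_def d_def .
  show "idx_h l (Pl_pos l h j) = h" unfolding idx_h_def p using md qi unfolding d_def by simp
  show "idx_j l (Pl_pos l h j) = j" unfolding idx_j_def p using md mi unfolding d_def by simp
qed

lemma basisPl_eq:
  assumes l: "l \<ge> 1" and c: "c < dimPl l"
  shows "basisPl l c h j
    = (if h \<in> {-int l..int l} \<and> j \<in> {-(int l - 1)..int l - 1} \<and> c = Pl_pos l h j then 1 else 0)"
proof -
  have "(h = idx_h l c \<and> j = idx_j l c)
      \<longleftrightarrow> (h \<in> {-int l..int l} \<and> j \<in> {-(int l - 1)..int l - 1} \<and> c = Pl_pos l h j)"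
  proof
    assume "h = idx_h l c \<and> j = idx_j l c"
    then show "h \<in> {-int l..int l} \<and> j \<in> {-(int l - 1)..int l - 1} \<and> c = Pl_pos l h j"
      using idx_in_range[OF l c] Pl_pos_idx[OF l c] by auto
  next
    assume "h \<in> {-int l..int l} \<and> j \<in> {-(int l - 1)..int l - 1} \<and> c = Pl_pos l h j"
    then show "h = idx_h l c \<and> j = idx_j l c" using idx_Pl_pos[OF l] by auto
  qed
  then show ?thesis unfolding basisPl_def by simp
qed

lemma array_of_vec_eq_sum_basis:
  assumes l: "l \<ge> 1"
  shows "array_of_vec l v h j = (\<Sum>c\<in>{0..<dimPl l}. v $ c * basisPl l c h j)"
proof (cases "h \<in> {-int l..int l} \<and> j \<in> {-(int l - 1)..int l - 1}")
  case True
  then have "Pl_pos l h j < dimPl l" using idx_Pl_pos[OF l] by auto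
  with True show ?thesis
    by (simp add: basisPl_eq[OF l] array_of_vec_def if_distrib[where f="\<lambda>x. _ * x"] cong: if_cong)
next
  case False
  then have "basisPl l c h j = 0" if "c < dimPl l" for c
    using basisPl_eq[OF l that] by auto
  with False show ?thesis unfolding array_of_vec_def by auto
qed

lemma Sop_sum:
  assumes "finite C"
  shows "Sop l (\<lambda>h j. \<Sum>c\<in>C. a c * f c h j) h j = (\<Sum>c\<in>C. a c * Sop l (f c) h j)"
proof (cases "h \<in> {-int l..int l}")
  case True
  then show ?thesis
    unfolding Sop_def beta_def
    by (simp add: sum_distrib_left sum.swap[of _ C] mult_ac)
next
  case False
  then show ?thesis unfolding Sop_def beta_def by (simp del: atLeastAtMost_iff)
qed

lemma S_mat_carrier: "S_mat l \<in> carrier_mat (dimPl l) (dimPl l)"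
  unfolding S_mat_def by simp

lemma S_mat_mult_vec:
  assumes l: "l \<ge> 1" and v: "v \<in> carrier_vec (dimPl l)"
  shows "S_mat l *\<^sub>v v = vec_of_array l (Sop l (array_of_vec l v))"
proof (rule eq_vecI)
  fix r assume "r < dim_vec (vec_of_array l (Sop l (array_of_vec l v)))"
  then have r: "r < dimPl l" unfolding vec_of_array_def by simp
  have "(S_mat l *\<^sub>v v) $ r = (\<Sum>c\<in>{0..<dimPl l}. v $ c * Sop l (basisPl l c) (idx_h l r) (idx_j l r))"
    using r v unfolding S_mat_def by (simp add: scalar_prod_def mult.commute)
  also have "\<dots> = Sop l (\<lambda>h j. \<Sum>c\<in>{0..<dimPl l}. v $ c * basisPl l c h j) (idx_h l r) (idx_j l r)"
    by (rule Sop_sum[symmetric]) simp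
  also have "(\<lambda>h j. \<Sum>c\<in>{0..<dimPl l}. v $ c * basisPl l c h j) = array_of_vec l v"
    by (simp add: fun_eq_iff array_of_vec_eq_sum_basis[OF l])
  finally show "(S_mat l *\<^sub>v v) $ r = vec_of_array l (Sop l (array_of_vec l v)) $ r"
    unfolding vec_of_array_def using r by simp
qed (simp add: vec_of_array_def S_mat_def)

lemma in_Pl_Sop:
  assumes P: "in_Pl l A"
  shows "in_Pl l (Sop l A)"
  unfolding in_Pl_def
proof (intro allI impI)
  fix h j assume a: "h \<notin> {-int l..int l} \<or> j \<notin> {-(int l - 1)..int l - 1}"
  show "Sop l A h j = 0"
  proof (cases "h \<in> {-int l..int l}")
    case False then show ?thesis unfolding Sop_def beta_def by (simp del: atLeastAtMost_iff)
  next
    case True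
    then have "j \<notin> {-(int l - 1)..int l - 1}" using a by simp
    then show ?thesis unfolding Sop_def by (intro beta_eq_0_outside[OF P]) auto
  qed
qed

lemma in_Pl_array_of_vec: "in_Pl l (array_of_vec l v)"
  unfolding in_Pl_def array_of_vec_def by auto

lemma array_of_vec_of_array:
  assumes l: "l \<ge> 1" and P: "in_Pl l A"
  shows "array_of_vec l (vec_of_array l A) = A"
proof (intro ext)
  fix h j
  show "array_of_vec l (vec_of_array l A) h j = A h j"
  proof (cases "h \<in> {-int l..int l} \<and> j \<in> {-(int l - 1)..int l - 1}")
    case True
    then show ?thesis unfolding array_of_vec_def vec_of_array_def using idx_Pl_pos[OF l] by auto
  next
    case False
    then show ?thesis unfolding array_of_vec_def using P unfolding in_Pl_def by auto
  qed
qed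

lemma array_of_vec_smult:
  assumes l: "l \<ge> 1" and v: "v \<in> carrier_vec (dimPl l)"
  shows "array_of_vec l (a \<cdot>\<^sub>v v) = (\<lambda>h j. a * array_of_vec l v h j)"
  unfolding array_of_vec_def using idx_Pl_pos[OF l] v by (auto intro!: ext)

section \<open>The spectral radius of \<open>S\<^sub>\<ell>\<close>\<close>

lemma Sop_norm2_decomposition:
  assumes P: "in_Pl l A"
  shows "(\<Sum>h\<in>{-int l..int l}. \<Sum>j\<in>{-(int l - 1)..int l - 1}. (cmod (A h j))^2)
       = (\<Sum>h\<in>{-int l..int l}. \<Sum>j\<in>{-(int l - 1)..int l - 1}. (cmod (Sop l A h j))^2)
         + (\<Sum>h\<in>{-int l..int l}. \<Sum>j\<in>{-int l..int l - 1}. (cmod (beta l A h (2*j+1)))^2)"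
proof -
  let ?I = "{-int l..int l}" and ?J = "{-(int l - 1)..int l - 1}"
  have even: "(\<Sum>j\<in>?I. (cmod (beta l A h (2*j)))^2) = (\<Sum>j\<in>?J. (cmod (Sop l A h j))^2)" for h
    using in_Pl_Sop[OF P] unfolding Sop_def in_Pl_def
    by (intro sum.mono_neutral_right) auto
  have "(\<Sum>h\<in>?I. \<Sum>j\<in>?J. (cmod (A h j))^2)
      = (\<Sum>h\<in>?I. \<Sum>k\<in>{-(2*int l)..2*int l}. (cmod (beta l A h k))^2)"
    by (rule beta_norm2_eq[OF P, symmetric])
  also have "\<dots> = (\<Sum>h\<in>?I. (\<Sum>j\<in>?I. (cmod (beta l A h (2*j)))^2)
                            + (\<Sum>j\<in>{-int l..int l - 1}. (cmod (beta l A h (2*j+1)))^2))"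
    by (intro sum.cong refl) (rule sum_split_even_odd)
  finally show ?thesis by (simp add: even sum.distrib)
qed

lemma Sop_eigenarray_solves_refinement:
  assumes P: "in_Pl l A" and nz: "A h0 j0 \<noteq> 0"
    and SA: "Sop l A = (\<lambda>h j. \<mu> * A h j)" and \<mu>: "cmod \<mu> \<ge> 1"
  shows "solves_refinement l \<mu> A"
proof -
  let ?I = "{-int l..int l}" and ?J = "{-(int l - 1)..int l - 1}"
  define N where "N = (\<Sum>h\<in>?I. \<Sum>j\<in>?J. (cmod (A h j))^2)"
  define Od where "Od = (\<Sum>h\<in>?I. \<Sum>j\<in>{-int l..int l - 1}. (cmod (beta l A h (2*j+1)))^2)"
  have "h0 \<in> ?I" "j0 \<in> ?J" using in_Pl_nonzero_range[OF P nz] by auto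
  then have "N > 0" unfolding N_def using nz
    by (intro sum_pos2[where i=h0] sum_pos2[where i=j0]) (auto intro: sum_nonneg)
  moreover have "(cmod \<mu>)^2 \<ge> 1" using \<mu> by (simp add: one_le_power)
  ultimately have "N \<le> (cmod \<mu>)^2 * N" by simp
  moreover have "N = (\<Sum>h\<in>?I. \<Sum>j\<in>?J. (cmod (Sop l A h j))^2) + Od"
    unfolding N_def Od_def by (rule Sop_norm2_decomposition[OF P])
  moreover have "(\<Sum>h\<in>?I. \<Sum>j\<in>?J. (cmod (Sop l A h j))^2) = (cmod \<mu>)^2 * N"
    unfolding N_def SA by (simp add: norm_mult power_mult_distrib sum_distrib_left)
  moreover have "Od \<ge> 0" unfolding Od_def by (intro sum_nonneg) auto
  ultimately have "Od = 0" by linarith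
  then have odd: "beta l A h (2*j+1) = 0" if "h \<in> ?I" "j \<in> {-int l..int l - 1}" for h j
    using that unfolding Od_def by (subst (asm) sum_nonneg_eq_0_iff; simp add: sum_nonneg)+
  have "beta l A h k = 0" if h: "h \<in> ?I" and k: "odd k" for h k
  proof (cases "\<bar>k\<bar> \<ge> 2 * int l")
    case False
    then have "k div 2 \<in> {-int l..int l - 1}" using k by auto
    moreover have "k = 2 * (k div 2) + 1" using k by presburger
    ultimately show ?thesis using odd[OF h] by metis
  qed (rule beta_eq_0_outside[OF P])
  moreover have "beta l A h (2*j) = \<mu> * A h j" for h j
    using fun_cong[OF fun_cong[OF SA, of h], of j] unfolding Sop_def .
  ultimately show ?thesis unfolding solves_refinement_def using P by blast
qed

lemma spectral_radius_S_mat_less_1: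
  assumes l: "l \<ge> 1"
  shows "spectral_radius (S_mat l) < 1"
proof (rule ccontr)
  assume sr: "\<not> spectral_radius (S_mat l) < 1"
  have "dimPl l > 0" using l unfolding dimPl_def by simp
  from spectral_radius_mem_max(1)[OF S_mat_carrier this]
  obtain \<mu> where \<mu>s: "\<mu> \<in> spectrum (S_mat l)" and "cmod \<mu> = spectral_radius (S_mat l)" by auto
  with sr have \<mu>: "cmod \<mu> \<ge> 1" by simp
  from \<mu>s obtain v where "eigenvector (S_mat l) v \<mu>"
    unfolding spectrum_def eigenvalue_def by auto
  moreover have "dim_row (S_mat l) = dimPl l" unfolding S_mat_def by simp
  ultimately have v: "v \<in> carrier_vec (dimPl l)" and v0: "v \<noteq> 0\<^sub>v (dimPl l)"
    and Sv: "S_mat l *\<^sub>v v = \<mu> \<cdot>\<^sub>v v"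
    unfolding eigenvector_def by auto
  define A where "A = array_of_vec l v"
  have P: "in_Pl l A" unfolding A_def by (rule in_Pl_array_of_vec)
  have "Sop l A = array_of_vec l (vec_of_array l (Sop l A))"
    using array_of_vec_of_array[OF l in_Pl_Sop[OF P]] by simp
  also have "vec_of_array l (Sop l A) = \<mu> \<cdot>\<^sub>v v" using S_mat_mult_vec[OF l v] Sv unfolding A_def by simp
  finally have SA: "Sop l A = (\<lambda>h j. \<mu> * A h j)" unfolding A_def using array_of_vec_smult[OF l v] by simp
  have "\<exists>r<dimPl l. v $ r \<noteq> 0"
  proof (rule ccontr)
    assume "\<not> ?thesis"
    then have "v = 0\<^sub>v (dimPl l)" using v by (intro eq_vecI) auto
    with v0 show False by simp
  qed
  then obtain r where r: "r < dimPl l" and "v $ r \<noteq> 0" by blast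
  then have nz: "A (idx_h l r) (idx_j l r) \<noteq> 0"
    unfolding A_def array_of_vec_def using idx_in_range[OF l r] Pl_pos_idx[OF l r] by simp
  have "A = (\<lambda>h j. 0)"
    by (rule solution_eq_0[OF Sop_eigenarray_solves_refinement[OF P nz SA \<mu>] l]) (use \<mu> in auto)
  with nz show False by simp
qed

section \<open>Powers of a matrix with spectral radius below 1\<close>

lemma eigenvector_smult_mat:
  fixes A :: "'a::comm_ring_1 mat"
  assumes A: "A \<in> carrier_mat n n" and ev: "eigenvector A v \<mu>"
  shows "eigenvector (a \<cdot>\<^sub>m A) v (a * \<mu>)"
proof -
  have v: "v \<in> carrier_vec n" "v \<noteq> 0\<^sub>v n" "A *\<^sub>v v = \<mu> \<cdot>\<^sub>v v"
    using ev A unfolding eigenvector_def by auto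
  have "(a \<cdot>\<^sub>m A) *\<^sub>v v = a \<cdot>\<^sub>v (A *\<^sub>v v)"
    using A v(1) by (intro eq_vecI) (auto simp: scalar_prod_def sum_distrib_left mult_ac)
  also have "\<dots> = (a * \<mu>) \<cdot>\<^sub>v v" using v(3) by (simp add: smult_smult_assoc)
  finally show ?thesis using v A unfolding eigenvector_def by auto
qed

lemma pow_smult_mat:
  fixes B :: "'a::comm_ring_1 mat"
  assumes B: "B \<in> carrier_mat n n"
  shows "(a \<cdot>\<^sub>m B) ^\<^sub>m k = a ^ k \<cdot>\<^sub>m (B ^\<^sub>m k)"
proof (induction k)
  case 0
  show ?case using B by (intro eq_matI) auto
next
  case (Suc k)
  have Bk: "B ^\<^sub>m k \<in> carrier_mat n n" using B by simp
  have "(a \<cdot>\<^sub>m B) ^\<^sub>m Suc k = (a ^ k \<cdot>\<^sub>m B ^\<^sub>m k) * (a \<cdot>\<^sub>m B)" using Suc by simp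
  also have "\<dots> = a ^ k \<cdot>\<^sub>m (a \<cdot>\<^sub>m (B ^\<^sub>m k * B))"
    by (simp add: mult_smult_assoc_mat[OF Bk smult_carrier_mat[OF B]] mult_smult_distrib[OF Bk B])
  also have "\<dots> = a ^ Suc k \<cdot>\<^sub>m B ^\<^sub>m Suc k"
    by (intro eq_matI) (auto simp: mult.assoc)
  finally show ?case .
qed

lemma spectral_radius_less_1_if_smult:
  fixes B :: "complex mat"
  assumes B: "B \<in> carrier_mat n n" and n: "n > 0" and r0: "r > 0"
    and sr: "spectral_radius (complex_of_real r \<cdot>\<^sub>m B) < r"
  shows "spectral_radius B < 1"
proof -
  let ?M = "complex_of_real r \<cdot>\<^sub>m B"
  have M: "?M \<in> carrier_mat n n" using B by simp
  from spectral_radius_mem_max(1)[OF B n] obtain \<mu>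
    where \<mu>: "\<mu> \<in> spectrum B" "cmod \<mu> = spectral_radius B" by auto
  then obtain v where "eigenvector B v \<mu>" unfolding spectrum_def eigenvalue_def by auto
  then have "eigenvector ?M v (complex_of_real r * \<mu>)" by (rule eigenvector_smult_mat[OF B])
  then have "complex_of_real r * \<mu> \<in> spectrum ?M" unfolding spectrum_def eigenvalue_def by auto
  then have "r * cmod \<mu> \<le> spectral_radius ?M"
    using spectral_radius_mem_max(2)[OF M n] r0 by (force simp: norm_mult)
  with sr have "r * cmod \<mu> < r * 1" by linarith
  then have "cmod \<mu> < 1" using r0 by (simp only: mult_less_cancel_left_pos)
  with \<mu>(2) show ?thesis by simp
qed

lemma spectral_radius_less_1_pow_tendsto_0:
  fixes M :: "complex mat"
  assumes M: "M \<in> carrier_mat n n" and sr: "spectral_radius M < 1" and i: "i < n" and j: "j < n"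
  shows "(\<lambda>k. (M ^\<^sub>m k) $$ (i,j)) \<longlonglongrightarrow> 0"
proof -
  have n: "n > 0" using i by simp
  from spectral_radius_mem_max(1)[OF M n] have sr0: "spectral_radius M \<ge> 0" by auto
  define r where "r = (1 + spectral_radius M) / 2"
  have r0: "r > 0" and r1: "r < 1" and sr_r: "spectral_radius M < r"
    using sr sr0 unfolding r_def by auto
  define B where "B = complex_of_real (1/r) \<cdot>\<^sub>m M"
  have B: "B \<in> carrier_mat n n" unfolding B_def using M by simp
  have MB: "M = complex_of_real r \<cdot>\<^sub>m B"
    unfolding B_def using M r0 by (intro eq_matI) (auto simp flip: of_real_mult)
  have "spectral_radius B < 1"
    using spectral_radius_less_1_if_smult[OF B n r0] sr_r MB by simp
  from spectral_radius_jnf_norm_bound_less_1_upper_triangular[OF B this]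
  obtain C where C: "\<And>k. norm_bound (B ^\<^sub>m k) C" by auto
  have bound: "norm ((M ^\<^sub>m k) $$ (i,j)) \<le> C * r ^ k" for k
  proof -
    have "norm ((M ^\<^sub>m k) $$ (i,j)) = r ^ k * norm ((B ^\<^sub>m k) $$ (i,j))"
      unfolding MB pow_smult_mat[OF B] using i j B r0 by (simp add: norm_mult norm_power)
    also have "\<dots> \<le> r ^ k * C"
      using C[of k] i j B r0 unfolding norm_bound_def by (intro mult_left_mono) auto
    finally show ?thesis by (simp add: mult.commute)
  qed
  show ?thesis
  proof (rule Lim_null_comparison)
    show "\<forall>\<^sub>F k in sequentially. norm ((M ^\<^sub>m k) $$ (i,j)) \<le> C * r ^ k" using bound by simp
    show "(\<lambda>k. C * r ^ k) \<longlonglongrightarrow> 0"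
      by (intro tendsto_mult_right_zero LIMSEQ_power_zero) (use r0 r1 in simp)
  qed
qed

section \<open>Averages over the circle\<close>

lemma has_integral_periodic_double:
  fixes f :: "real \<Rightarrow> complex"
  assumes per: "\<And>x. f (x + 2*pi) = f x" and fI: "(f has_integral I) {0..2*pi}"
  shows "((\<lambda>x. f (2*x)) has_integral I) {0..2*pi}"
proof -
  have "f \<circ> (+) (2*pi) = f" using per by (auto simp: add.commute)
  with fI has_integral_shift_Icc_real[of f "2*pi" I 0 "2*pi"]
  have "(f has_integral I) {2*pi..2*pi+2*pi}" by simp
  with fI have "(f has_integral (I + I)) {0..2*pi+2*pi}"
    by (rule has_integral_combine[rotated 2]) auto
  then have "((\<lambda>x. f (2 * x)) has_integral (1 / \<bar>2\<bar>) *\<^sub>R (I + I)) ((\<lambda>x. x / 2) ` {0..2*pi+2*pi})"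
    by (rule has_integral_stretch_real) simp
  moreover have "(\<lambda>x. x / 2) ` {0..2*pi+2*pi} = {0..2*pi}"
    using image_affinity_atLeastAtMost_div[of 2 0 0 "2*pi+2*pi"] by simp
  moreover have "(1 / \<bar>2::real\<bar>) *\<^sub>R (I + I) = I" by (simp add: scaleR_conv_of_real)
  ultimately show ?thesis by simp
qed

text \<open>Shifting by \<open>\<pi>\<close> changes the sign of the integrand.\<close>

lemma has_integral_cis_mult_periodic_double:
  fixes f :: "real \<Rightarrow> complex"
  assumes per: "\<And>x. f (x + 2*pi) = f x" and cont: "continuous_on UNIV f"
  shows "((\<lambda>t. cis t * f (2*t)) has_integral 0) {0..2*pi}"
proof -
  define h where "h = (\<lambda>t. cis t * f (2*t))"
  have c2: "continuous_on UNIV (\<lambda>t. f (2*t))"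
    by (rule continuous_on_compose2[OF cont]) (auto intro: continuous_intros)
  have hc: "continuous_on UNIV h" unfolding h_def
    by (intro continuous_on_mult continuous_on_cis continuous_on_id c2)
  have hneg: "h (pi + t) = - h t" for t
  proof -
    have "cis (pi + t) = - cis t" by (simp add: cis_mult[symmetric])
    moreover have "f (2 * (pi + t)) = f (2*t)" using per[of "2*t"] by (simp add: algebra_simps)
    ultimately show ?thesis unfolding h_def by simp
  qed
  have "h integrable_on {0..pi}"
    by (rule integrable_continuous_interval) (rule continuous_on_subset[OF hc], simp)
  then obtain J where J: "(h has_integral J) {0..pi}" by (auto simp: integrable_on_def)
  have "h \<circ> (+) pi = (\<lambda>x. - h x)" using hneg by auto
  then have "((h \<circ> (+) pi) has_integral -J) {0..pi}" using has_integral_neg[OF J] by simp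
  then have "(h has_integral -J) {pi..pi+pi}"
    using has_integral_shift_Icc_real[of h pi "-J" 0 pi] by simp
  with J have "(h has_integral (J + -J)) {0..pi+pi}"
    by (rule has_integral_combine[rotated 2]) auto
  moreover have "pi + pi = 2 * pi" by simp
  ultimately show ?thesis unfolding h_def by simp
qed

lemma cis_int_mult_add_2pi: "cis (of_int m * (x + 2*pi)) = cis (of_int m * x)"
proof -
  have "cis (of_int m * (x + 2*pi)) = cis (of_int m * x) * cis (2 * pi * of_int m)"
    by (simp add: cis_mult algebra_simps)
  then show ?thesis by simp
qed

lemma has_integral_cis_int:
  "((\<lambda>t. cis (of_int k * t)) has_integral (if k = 0 then complex_of_real (2*pi) else 0)) {0..2*pi}"
proof (induction "nat \<bar>k\<bar>" arbitrary: k rule: less_induct)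
  case less
  consider "k = 0" | m where "m \<noteq> 0" "k = 2*m" | m where "k = 2*m + 1"
    by (metis evenE oddE mult_zero_right)
  then show ?case
  proof cases
    case 1
    then show ?thesis using has_integral_const_real[of "1::complex" 0 "2*pi"]
      by (simp add: content_real scaleR_conv_of_real)
  next
    case (2 m)
    then have "((\<lambda>t. cis (of_int m * t)) has_integral 0) {0..2*pi}"
      using less[of m] by auto
    from has_integral_periodic_double[where f="\<lambda>x. cis (of_int m * x)", OF cis_int_mult_add_2pi this] 2
    show ?thesis
      by (simp add: mult_ac)
  next
    case (3 m)
    have "((\<lambda>t. cis t * cis (of_int m * (2*t))) has_integral 0) {0..2*pi}"
      by (rule has_integral_cis_mult_periodic_double[where f="\<lambda>x. cis (of_int m * x)",
          OF cis_int_mult_add_2pi])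
        (intro continuous_intros)
    moreover have "k \<noteq> 0" using 3 by presburger
    ultimately show ?thesis using 3 by (simp add: cis_mult algebra_simps)
  qed
qed

section \<open>The expectation of the product\<close>

definition eval_vec :: "nat \<Rightarrow> (int \<Rightarrow> int \<Rightarrow> complex) \<Rightarrow> complex \<Rightarrow> complex vec" where
  "eval_vec l A \<omega> = vec (2*l+1) (\<lambda>c. evalA l A \<omega> (int c - int l))"

text \<open>The odd coefficients of \<open>T\<^sup>\<ell>A\<close>, as a Laurent polynomial in \<open>u = \<omega>\<^sup>2\<close>.\<close>

definition odd_vec :: "nat \<Rightarrow> (int \<Rightarrow> int \<Rightarrow> complex) \<Rightarrow> complex \<Rightarrow> complex vec" where
  "odd_vec l A u = vec (2*l+1) (\<lambda>c. \<Sum>j\<in>{-int l..int l - 1}. beta l A (int c - int l) (2*j+1) * u powi j)"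

lemma eval_vec_carrier: "eval_vec l A \<omega> \<in> carrier_vec (2*l+1)"
  unfolding eval_vec_def by simp

lemma odd_vec_carrier: "odd_vec l A \<omega> \<in> carrier_vec (2*l+1)"
  unfolding odd_vec_def by simp

lemma T_mat_carrier: "T_mat l \<omega> \<in> carrier_mat (2*l+1) (2*l+1)"
  unfolding T_mat_def by simp

lemma T_prod_carrier: "T_prod l k \<omega> \<in> carrier_mat (2*l+1) (2*l+1)"
proof (induction k)
  case 0
  show ?case by (simp only: T_prod.simps(1)) (rule T_mat_carrier)
next
  case (Suc k)
  show ?case by (simp only: T_prod.simps(2)) (rule mult_carrier_mat[OF T_mat_carrier Suc.IH])
qed

lemma dim_T_prod [simp]: "dim_row (T_prod l k \<omega>) = 2*l+1" "dim_col (T_prod l k \<omega>) = 2*l+1"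
  using T_prod_carrier[of l k \<omega>] by auto

lemma T_prod_Suc_right: "T_prod l (Suc k) \<omega> = T_prod l k (\<omega>\<^sup>2) * T_mat l \<omega>"
proof (induction k)
  case (Suc k)
  have "T_prod l (Suc (Suc k)) \<omega> = T_mat l (\<omega> ^ 2 ^ Suc (Suc k)) * (T_prod l k (\<omega>\<^sup>2) * T_mat l \<omega>)"
    using Suc by simp
  also have "\<dots> = (T_mat l (\<omega> ^ 2 ^ Suc (Suc k)) * T_prod l k (\<omega>\<^sup>2)) * T_mat l \<omega>"
    by (rule assoc_mult_mat[symmetric, OF T_mat_carrier T_prod_carrier T_mat_carrier])
  also have "\<omega> ^ 2 ^ Suc (Suc k) = (\<omega>\<^sup>2) ^ 2 ^ Suc k" by (simp add: power_mult)
  finally show ?case by simp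
qed simp

lemma T_mat_mult_eval_vec_nth:
  assumes P: "in_Pl l A" and w: "\<omega> \<noteq> 0" and r: "r < 2*l+1"
  shows "(T_mat l \<omega> *\<^sub>v eval_vec l A \<omega>) $ r
       = (\<Sum>k\<in>{-(2*int l)..2*int l}. beta l A (int r - int l) k * \<omega> powi k)"
proof -
  have h: "int r - int l \<in> {-int l..int l}" using r by auto
  have "(T_mat l \<omega> *\<^sub>v eval_vec l A \<omega>) $ r
      = (\<Sum>n\<in>{-int l..int l}. tau l (int r - int l) n * \<omega> powi n * evalA l A \<omega> n)"
    using r by (simp add: T_mat_def eval_vec_def scalar_prod_def sum_centered_eq_sum_lessThan)
  also have "\<dots> = (\<Sum>k\<in>{-(2*int l)..2*int l}. beta l A (int r - int l) k * \<omega> powi k)"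
    by (rule sum_tau_powi_evalA_eq_beta[OF P h w])
  finally show ?thesis .
qed

lemma T_mat_mult_eval_vec:
  assumes P: "in_Pl l A" and w: "\<omega> \<noteq> 0"
  shows "T_mat l \<omega> *\<^sub>v eval_vec l A \<omega> = eval_vec l (Sop l A) (\<omega>\<^sup>2) + \<omega> \<cdot>\<^sub>v odd_vec l A (\<omega>\<^sup>2)"
proof (rule eq_vecI)
  fix r assume "r < dim_vec (eval_vec l (Sop l A) (\<omega>\<^sup>2) + \<omega> \<cdot>\<^sub>v odd_vec l A (\<omega>\<^sup>2))"
  then have r: "r < 2*l+1" unfolding eval_vec_def odd_vec_def by simp
  let ?h = "int r - int l"
  have h: "?h \<in> {-int l..int l}" using r by auto
  have "(T_mat l \<omega> *\<^sub>v eval_vec l A \<omega>) $ r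
      = (\<Sum>j\<in>{-int l..int l}. beta l A ?h (2*j) * \<omega> powi (2*j))
        + (\<Sum>j\<in>{-int l..int l - 1}. beta l A ?h (2*j+1) * \<omega> powi (2*j+1))"
    unfolding T_mat_mult_eval_vec_nth[OF P w r] by (rule sum_split_even_odd)
  also have "(\<Sum>j\<in>{-int l..int l}. beta l A ?h (2*j) * \<omega> powi (2*j)) = evalA l (Sop l A) (\<omega>\<^sup>2) ?h"
    by (simp add: evalA_eq_sum_wide[OF in_Pl_Sop[OF P]] Sop_def power_int_double)
  also have "(\<Sum>j\<in>{-int l..int l - 1}. beta l A ?h (2*j+1) * \<omega> powi (2*j+1))
      = \<omega> * (\<Sum>j\<in>{-int l..int l - 1}. beta l A ?h (2*j+1) * (\<omega>\<^sup>2) powi j)"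
    using w by (simp add: power_int_add power_int_double power_int_double[unfolded mult.commute[of 2]]
        sum_distrib_left mult_ac)
  finally show "(T_mat l \<omega> *\<^sub>v eval_vec l A \<omega>) $ r
      = (eval_vec l (Sop l A) (\<omega>\<^sup>2) + \<omega> \<cdot>\<^sub>v odd_vec l A (\<omega>\<^sup>2)) $ r"
    using r unfolding eval_vec_def odd_vec_def by simp
qed (simp add: eval_vec_def odd_vec_def T_mat_def)

lemma continuous_on_mult_mat_vec_nth:
  fixes M :: "real \<Rightarrow> complex mat" and V :: "real \<Rightarrow> complex vec"
  assumes "\<And>i j. i < n \<Longrightarrow> j < n \<Longrightarrow> continuous_on S (\<lambda>t. M t $$ (i,j))"
    and "\<And>i. i < n \<Longrightarrow> continuous_on S (\<lambda>t. V t $ i)"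
    and "\<And>t. M t \<in> carrier_mat n n" and "\<And>t. V t \<in> carrier_vec n" and r: "r < n"
  shows "continuous_on S (\<lambda>t. (M t *\<^sub>v V t) $ r)"
proof -
  have "(M t *\<^sub>v V t) $ r = (\<Sum>i\<in>{0..<n}. M t $$ (r, i) * V t $ i)" for t
    using assms(3,4)[of t] r by (simp add: scalar_prod_def)
  then show ?thesis using assms r by (auto intro!: continuous_on_sum continuous_on_mult)
qed

lemma continuous_on_T_prod_nth:
  assumes "r < 2*l+1" and "c < 2*l+1"
  shows "continuous_on UNIV (\<lambda>t. T_prod l k (cis t) $$ (r, c))"
  using assms
proof (induction k arbitrary: r c)
  case 0
  then show ?case by (auto simp: T_mat_def intro!: continuous_intros)
next
  case (Suc k)
  have "T_prod l (Suc k) (cis t) $$ (r, c) = (T_mat l (cis t ^ 2 ^ Suc k) * T_prod l k (cis t)) $$ (r, c)" for t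
    by simp
  also have "\<dots> t = (\<Sum>i\<in>{0..<2*l+1}. tau l (int r - int l) (int i - int l)
        * ((cis t) ^ 2 ^ Suc k) powi (int i - int l) * T_prod l k (cis t) $$ (i, c))" for t
    using Suc.prems T_prod_carrier[of l k "cis t"] by (simp add: T_mat_def scalar_prod_def)
  finally show ?case
    using Suc by (auto intro!: continuous_on_sum continuous_on_mult continuous_intros Suc.IH)
qed

lemma continuous_on_odd_vec_cis: "c < 2*l+1 \<Longrightarrow> continuous_on UNIV (\<lambda>t. odd_vec l A (cis t) $ c)"
  unfolding odd_vec_def by (auto intro!: continuous_intros)

lemma T_prod_Suc_mult_eval_vec_cis:
  assumes "in_Pl l A"
  shows "T_prod l (Suc k) (cis t) *\<^sub>v eval_vec l A (cis t)
       = T_prod l k (cis (2*t)) *\<^sub>v eval_vec l (Sop l A) (cis (2*t))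
         + cis t \<cdot>\<^sub>v (T_prod l k (cis (2*t)) *\<^sub>v odd_vec l A (cis (2*t)))"
proof -
  have cis2: "cis t ^ 2 = cis (2*t)" by (simp only: power2_eq_square cis_mult mult_2)
  have "T_prod l (Suc k) (cis t) *\<^sub>v eval_vec l A (cis t)
      = T_prod l k (cis (2*t)) *\<^sub>v (T_mat l (cis t) *\<^sub>v eval_vec l A (cis t))"
    unfolding T_prod_Suc_right cis2
    by (rule assoc_mult_mat_vec[OF T_prod_carrier T_mat_carrier eval_vec_carrier])
  also have "\<dots> = T_prod l k (cis (2*t)) *\<^sub>v eval_vec l (Sop l A) (cis (2*t))
      + cis t \<cdot>\<^sub>v (T_prod l k (cis (2*t)) *\<^sub>v odd_vec l A (cis (2*t)))"
    unfolding T_mat_mult_eval_vec[OF assms cis_neq_zero] cis2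
    by (simp add: mult_add_distrib_mat_vec[OF T_prod_carrier eval_vec_carrier
        smult_carrier_vec[THEN iffD2, OF odd_vec_carrier]] mult_mat_vec[OF T_prod_carrier odd_vec_carrier])
  finally show ?thesis .
qed

text \<open>Induction on \<open>k\<close> via \<open>T_prod (k+1) \<omega> = T_prod k (\<omega>\<^sup>2) T(\<omega>)\<close>: averaging over the circle
  is invariant under \<open>\<omega> \<mapsto> \<omega>\<^sup>2\<close> and annihilates the odd part.\<close>

lemma has_integral_T_prod_mult_eval_vec:
  assumes "in_Pl l A" and "r < 2*l+1"
  shows "((\<lambda>t. (T_prod l k (cis t) *\<^sub>v eval_vec l A (cis t)) $ r) has_integral
           (complex_of_real (2*pi) * (Sop l ^^ Suc k) A (int r - int l) 0)) {0..2*pi}"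
  using assms
proof (induction k arbitrary: A)
  case 0
  let ?K = "{-(2*int l)..2*int l}" and ?b = "beta l A (int r - int l)"
  have "((\<lambda>t. \<Sum>k\<in>?K. ?b k * cis (of_int k * t)) has_integral
          (\<Sum>k\<in>?K. ?b k * (if k = 0 then complex_of_real (2*pi) else 0))) {0..2*pi}"
    by (intro has_integral_sum has_integral_mult_right has_integral_cis_int) auto
  moreover have "(T_prod l 0 (cis t) *\<^sub>v eval_vec l A (cis t)) $ r = (\<Sum>k\<in>?K. ?b k * cis (of_int k * t))" for t
    using T_mat_mult_eval_vec_nth[OF "0.prems"(1) _ "0.prems"(2)] by (simp add: cis_power_int)
  ultimately show ?case
    by (simp add: Sop_def if_distrib[where f="\<lambda>x. _ * x"] mult.commute cong: if_cong)
next
  case (Suc k)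
  define g1 where "g1 = (\<lambda>s. (T_prod l k (cis s) *\<^sub>v eval_vec l (Sop l A) (cis s)) $ r)"
  define g2 where "g2 = (\<lambda>s. (T_prod l k (cis s) *\<^sub>v odd_vec l A (cis s)) $ r)"
  have cis_per: "cis (x + 2*pi) = cis x" for x by (simp add: cis_mult[symmetric])
  have eq: "(T_prod l (Suc k) (cis t) *\<^sub>v eval_vec l A (cis t)) $ r = g1 (2*t) + cis t * g2 (2*t)" for t
    using T_prod_Suc_mult_eval_vec_cis[OF Suc.prems(1)] Suc.prems(2) unfolding g1_def g2_def by simp
  have "(g1 has_integral (complex_of_real (2*pi) * (Sop l ^^ Suc (Suc k)) A (int r - int l) 0)) {0..2*pi}"
    unfolding g1_def using Suc.IH[OF in_Pl_Sop[OF Suc.prems(1)] Suc.prems(2)]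
    by (simp only: funpow_Suc_right o_def)
  then have "((\<lambda>t. g1 (2*t)) has_integral (complex_of_real (2*pi) * (Sop l ^^ Suc (Suc k)) A (int r - int l) 0)) {0..2*pi}"
    by (rule has_integral_periodic_double[rotated]) (simp add: g1_def cis_per)
  moreover have "((\<lambda>t. cis t * g2 (2*t)) has_integral 0) {0..2*pi}"
  proof (rule has_integral_cis_mult_periodic_double)
    show "g2 (x + 2*pi) = g2 x" for x unfolding g2_def by (simp add: cis_per)
    show "continuous_on UNIV g2" unfolding g2_def
      by (rule continuous_on_mult_mat_vec_nth[OF continuous_on_T_prod_nth continuous_on_odd_vec_cis
            T_prod_carrier odd_vec_carrier Suc.prems(2)])
  qed
  ultimately show ?case unfolding eq by (metis (no_types) add.right_neutral has_integral_add)
qed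

lemma funpow_Sop_eq_S_mat_power:
  assumes l: "l \<ge> 1" and "in_Pl l A"
  shows "(Sop l ^^ m) A = array_of_vec l (S_mat l ^\<^sub>m m *\<^sub>v vec_of_array l A)"
  using assms(2)
proof (induction m arbitrary: A)
  case 0
  have "S_mat l ^\<^sub>m 0 = 1\<^sub>m (dimPl l)" unfolding S_mat_def by simp
  then show ?case using array_of_vec_of_array[OF l "0.prems"] by (simp add: vec_of_array_def)
next
  case (Suc m)
  have v: "vec_of_array l A \<in> carrier_vec (dimPl l)" unfolding vec_of_array_def by simp
  have "(Sop l ^^ Suc m) A = (Sop l ^^ m) (Sop l A)" by (simp only: funpow_Suc_right o_def)
  also have "\<dots> = array_of_vec l (S_mat l ^\<^sub>m m *\<^sub>v vec_of_array l (Sop l A))"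
    by (rule Suc.IH[OF in_Pl_Sop[OF Suc.prems]])
  also have "vec_of_array l (Sop l A) = S_mat l *\<^sub>v vec_of_array l A"
    using S_mat_mult_vec[OF l v] array_of_vec_of_array[OF l Suc.prems] by simp
  also have "S_mat l ^\<^sub>m m *\<^sub>v (S_mat l *\<^sub>v vec_of_array l A) = S_mat l ^\<^sub>m Suc m *\<^sub>v vec_of_array l A"
    using assoc_mult_mat_vec[OF pow_carrier_mat[OF S_mat_carrier] S_mat_carrier v] by simp
  finally show ?case .
qed

lemma funpow_Sop_tendsto_0:
  assumes l: "l \<ge> 1" and P: "in_Pl l A"
    and h: "h \<in> {-int l..int l}" and j: "j \<in> {-(int l - 1)..int l - 1}"
  shows "(\<lambda>m. (Sop l ^^ m) A h j) \<longlonglongrightarrow> 0"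
proof -
  let ?N = "dimPl l" and ?p = "Pl_pos l h j" and ?x = "vec_of_array l A"
  have p: "?p < ?N" using idx_Pl_pos[OF l h j] by simp
  have "(Sop l ^^ m) A h j = (\<Sum>c\<in>{0..<?N}. (S_mat l ^\<^sub>m m) $$ (?p, c) * ?x $ c)" for m
  proof -
    have "(Sop l ^^ m) A h j = (S_mat l ^\<^sub>m m *\<^sub>v ?x) $ ?p"
      unfolding funpow_Sop_eq_S_mat_power[OF l P] array_of_vec_def using h j by simp
    also have "\<dots> = row (S_mat l ^\<^sub>m m) ?p \<bullet> ?x"
      by (rule index_mult_mat_vec) (use p S_mat_carrier[of l] in simp)
    also have "\<dots> = (\<Sum>c\<in>{0..<?N}. (S_mat l ^\<^sub>m m) $$ (?p, c) * ?x $ c)"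
      using p S_mat_carrier[of l] by (simp add: scalar_prod_def vec_of_array_def)
    finally show ?thesis .
  qed
  then show ?thesis
    by (simp only:) (intro tendsto_null_sum tendsto_mult_left_zero
        spectral_radius_less_1_pow_tendsto_0[OF S_mat_carrier spectral_radius_S_mat_less_1[OF l] p],
        auto)
qed

lemma E_T_prod_eq_funpow_Sop:
  assumes l: "l \<ge> 1" and r: "r < 2*l+1" and c: "c < 2*l+1"
  shows "E_T_prod l k r c
    = (Sop l ^^ Suc k) (\<lambda>h j. if h = int c - int l \<and> j = 0 then 1 else 0) (int r - int l) 0"
proof -
  define e where "e = (\<lambda>(h::int) (j::int). if h = int c - int l \<and> j = 0 then (1::complex) else 0)"
  have P: "in_Pl l e" unfolding in_Pl_def e_def using c l by auto
  have "eval_vec l e \<omega> = unit_vec (2*l+1) c" for \<omega>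
  proof (rule eq_vecI)
    fix n assume "n < dim_vec (unit_vec (2*l+1) c)"
    then have n: "n < 2*l+1" by simp
    have "evalA l e \<omega> (int n - int l)
        = (\<Sum>j\<in>{-(int l - 1)..int l - 1}. (if n = c \<and> j = 0 then 1 else 0) * \<omega> powi j)"
      unfolding evalA_def e_def by (intro sum.cong refl) auto
    also have "\<dots> = (if n = c then 1 else 0)"
      using l by (simp add: if_distrib[where f="\<lambda>x. x * _"] cong: if_cong)
    finally show "eval_vec l e \<omega> $ n = unit_vec (2*l+1) c $ n" unfolding eval_vec_def using n c by simp
  qed (simp add: eval_vec_def)
  then have "T_prod l k (cis t) $$ (r, c) = (T_prod l k (cis t) *\<^sub>v eval_vec l e (cis t)) $ r" for t
    using r c T_prod_carrier[of l k "cis t"] by simp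
  then have "integral {0..2*pi} (\<lambda>t. T_prod l k (cis t) $$ (r, c))
      = complex_of_real (2*pi) * (Sop l ^^ Suc k) e (int r - int l) 0"
    using has_integral_T_prod_mult_eval_vec[OF P r] by (simp add: integral_unique)
  then show ?thesis unfolding E_T_prod_def e_def by simp
qed

lemma E_T_prod_tendsto_0:
  assumes l: "l \<ge> 1" and r: "r < 2*l+1" and c: "c < 2*l+1"
  shows "(\<lambda>k. E_T_prod l k r c) \<longlonglongrightarrow> 0"
proof -
  have "in_Pl l (\<lambda>h j. if h = int c - int l \<and> j = 0 then 1 else 0)"
    unfolding in_Pl_def using c l by auto
  from funpow_Sop_tendsto_0[OF l this, of "int r - int l" 0] r l
  have "(\<lambda>m. (Sop l ^^ m) (\<lambda>h j. if h = int c - int l \<and> j = 0 then 1 else 0) (int r - int l) 0) \<longlonglongrightarrow> 0"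
    by simp
  then show ?thesis unfolding E_T_prod_eq_funpow_Sop[OF l r c] by (rule LIMSEQ_Suc)
qed

theorem mainTheorem12:
  fixes l :: nat
  assumes "l \<ge> 1"
  shows "spectral_radius (S_mat l) < 1
     \<and> (\<forall>c :: complex. \<forall>A. cmod c = 1 \<longrightarrow> in_Pl l A \<longrightarrow>
           (\<forall>\<omega> :: complex. \<omega> \<noteq> 0 \<longrightarrow>
              (\<forall>h\<in>{-int l..int l}. (\<Sum>n\<in>{-int l..int l}. tau l h n * \<omega> powi n * evalA l A \<omega> n)
                                   = c * evalA l A (\<omega>\<^sup>2) h))
           \<longrightarrow> A = (\<lambda>h j. 0))
     \<and> (\<forall>r < 2 * l + 1. \<forall>c < 2 * l + 1. (\<lambda>k. E_T_prod l k r c) \<longlonglongrightarrow> 0)"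
proof (intro conjI allI impI)
  show "spectral_radius (S_mat l) < 1" by (rule spectral_radius_S_mat_less_1[OF assms])
next
  fix c :: complex and A
  assume "cmod c = 1" and P: "in_Pl l A"
    and "\<forall>\<omega> :: complex. \<omega> \<noteq> 0 \<longrightarrow> (\<forall>h\<in>{-int l..int l}.
           (\<Sum>n\<in>{-int l..int l}. tau l h n * \<omega> powi n * evalA l A \<omega> n) = c * evalA l A (\<omega>\<^sup>2) h)"
  then have "solves_refinement l c A" and "c \<noteq> 0"
    by (auto intro: refinement_equation_imp_solves_refinement[OF P])
  then show "A = (\<lambda>h j. 0)" using solution_eq_0 assms by blast
next
  fix r c assume "r < 2 * l + 1" and "c < 2 * l + 1"
  then show "(\<lambda>k. E_T_prod l k r c) \<longlonglongrightarrow> 0" by (rule E_T_prod_tendsto_0[OF assms])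
qed
end
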